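(* Let $q\ge3$, $\delta\in(0,1)$, $\varepsilon\in(0,1/2]$, $c=4\ln(q/\varepsilon)$, $t=\lceil\log_c(2m)\rceil$, $\gamma=\varepsilon/(256c^2/\delta)^q$, and for $j_1,\dots,j_{q-1}\in[t]$ let $P_{j_1,\dots,j_{q-1}}=[2m]\times[c^{j_1-1},c^{j_1})\times\dots\times[c^{j_{q-1}-1},c^{j_{q-1}})$, where $(k,d_1,\dots,d_{q-1})$ is identified with the set $\{k,k+d_1,\dots,k+d_1+\dots+d_{q-1}\}$. Let $C:\{0,1\}^n\to\{0,1\}^m$ be a $(q,\delta,\varepsilon)$ insdel LDC with a non-adaptive decoder, with $m$ sufficiently large in terms of $\delta,\varepsilon$. Then for every $i\in[n]$ there exist $j_1,\dots,j_{q-1}\in[t]$ such that $|P_{j_1,\dots,j_{q-1}}\cap\mathrm{Good}_i|\ge\gamma|P_{j_1,\dots,j_{q-1}}|/(\log_2m+2)^{q-2}$.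
   Context: $C$ is a $(q,\delta,\varepsilon)$ insdel LDC if a randomized $\mathrm{Dec}$, given oracle access to $y\in\{0,1\}^{m'}$, $m'$ and $i\in[n]$, reads at most $q$ symbols and satisfies $\Pr[\mathrm{Dec}(y,m',i)=x_i]\ge1/2+\varepsilon$ whenever $\mathrm{ED}(C(x),y)\le2\delta m$, $\mathrm{ED}$ being insertion/deletion distance; non-adaptive means its query distribution does not depend on $y$. For $x\in\{0,1\}^n$, $C'(x)\in\{0,1\}^{2m}$ is $C(x)$ followed by $m$ independent uniform random bits. $\mathrm{Good}_i$ is the set of $Q\in\binom{[2m]}{q}$ such that some $f:\{0,1\}^q\to\{0,1\}$ has $\Pr[f(C'(x)_Q)=x_i]\ge1/2+\varepsilon/4$, over uniform $x$ and the padded bits ($C'(x)_Q$ is the restriction to $Q$ in increasing order). *)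

theory Defs
  imports "HOL-Probability.Probability_Mass_Function"
begin

text \<open>Binary strings are bool lists; positions and message indices are 0-based.\<close>

definition strings :: "nat \<Rightarrow> bool list set" where
  "strings n = {xs. length xs = n}"

definition insdel_step :: "'a list \<Rightarrow> 'a list \<Rightarrow> bool" where
  "insdel_step u v \<longleftrightarrow> (\<exists>xs ys a. (u = xs @ ys \<and> v = xs @ a # ys) \<or> (u = xs @ a # ys \<and> v = xs @ ys))"

definition ED :: "'a list \<Rightarrow> 'a list \<Rightarrow> nat" where
  "ED u v = (LEAST k. (insdel_step ^^ k) u v)"

text \<open>A non-adaptive randomized decoder: for each received length m' and index i,
  a distribution over a query tuple Q (positions in y) together with a decision
  function applied to the answers y_Q (the decision function may itself be random,
  which covers any randomized post-processing of the answers).\<close>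
type_synonym decoder = "nat \<Rightarrow> nat \<Rightarrow> (nat list \<times> (bool list \<Rightarrow> bool)) pmf"

definition dec_output_prob :: "decoder \<Rightarrow> bool list \<Rightarrow> nat \<Rightarrow> bool \<Rightarrow> real" where
  "dec_output_prob Dec y i b =
     measure_pmf.prob (Dec (length y) i) {(Q, f). f (map (\<lambda>p. y ! p) Q) = b}"

definition nonadaptive_insdel_LDC ::
  "nat \<Rightarrow> real \<Rightarrow> real \<Rightarrow> nat \<Rightarrow> nat \<Rightarrow> (bool list \<Rightarrow> bool list) \<Rightarrow> bool" where
  "nonadaptive_insdel_LDC q \<delta> \<epsilon> n m C \<longleftrightarrow>
     (\<forall>x\<in>strings n. length (C x) = m) \<and>
     (\<exists>Dec :: decoder.
        (\<forall>m' i Q f. (Q, f) \<in> set_pmf (Dec m' i) \<longrightarrow> length Q \<le> q \<and> (\<forall>p\<in>set Q. p < m')) \<and>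
        (\<forall>x\<in>strings n. \<forall>y :: bool list. \<forall>i<n.
            real (ED (C x) y) \<le> 2 * \<delta> * real m \<longrightarrow>
            dec_output_prob Dec y i (x ! i) \<ge> 1/2 + \<epsilon>))"

text \<open>C'(x) = C(x) followed by random bits r; restriction to Q in increasing order.\<close>
definition restrict_word :: "bool list \<Rightarrow> nat set \<Rightarrow> bool list" where
  "restrict_word w Q = map (\<lambda>p. w ! p) (sorted_list_of_set Q)"

definition Good :: "nat \<Rightarrow> real \<Rightarrow> nat \<Rightarrow> nat \<Rightarrow> (bool list \<Rightarrow> bool list) \<Rightarrow> nat \<Rightarrow> nat set set" where
  "Good q \<epsilon> n m C i =
     {Q. Q \<subseteq> {0..<2*m} \<and> card Q = q \<and>
        (\<exists>f :: bool list \<Rightarrow> bool.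
           real (card {(x, r). x \<in> strings n \<and> r \<in> strings m \<and>
                     f (restrict_word (C x @ r) Q) = x ! i}) / 2 ^ (n + m)
           \<ge> 1/2 + \<epsilon>/4)}"

definition tuple_set :: "nat \<times> nat list \<Rightarrow> nat set" where
  "tuple_set p = {fst p + sum_list (take l (snd p)) | l. l \<le> length (snd p)}"

text \<open>P_{j_1..j_{q-1}} = [2m] x [c^{j_1-1}, c^{j_1}) x ... (0-based k).\<close>
definition Pbox :: "real \<Rightarrow> nat \<Rightarrow> nat list \<Rightarrow> (nat \<times> nat list) set" where
  "Pbox c m js = {(k, ds). k < 2*m \<and> length ds = length js \<and>
       (\<forall>l<length js. c ^ (js!l - 1) \<le> real (ds!l) \<and> real (ds!l) < c ^ (js!l))}"

end

theory Submission
  imports Defs "HOL-Library.Sublist" "HOL-Library.FuncSet"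
begin

text \<open>
  Suppose that for some \<open>i\<close> every box \<open>P_js\<close> contains fewer than a \<open>\<gamma>/(log m + 2)^(q-2)\<close>
  fraction of \<open>Good\<close> tuples. Let a random adversary read \<open>C x\<close>, followed by random padding,
  through the strictly increasing map \<open>p \<mapsto> p + u + \<lfloor>\<rho> p / m\<rfloor> + \<Sum>{Y(s,b) | b 2^s \<le> p}\<close>: a random
  shift \<open>u\<close>, a random dilation \<open>\<rho>\<close>, and about \<open>2^s/H\<close> random insertions at every dyadic point
  \<open>b 2^s\<close>. It inserts at most \<open>\<delta> m\<close> symbols, so the decoder must still be right with probability
  \<open>1/2 + \<epsilon>\<close>. Fix a query set \<open>Q\<close> of size \<open>q\<close>. Every gap of its warped image is caught by one of
  two consecutive scales, and the number of adversaries producing a given warped tuple is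
  controlled by the randomness of the top dyadic block inside each gap (and of \<open>u\<close>, or of \<open>\<rho>\<close> when
  the first gap is long). Hence the warped image of \<open>Q\<close> is \<open>Good\<close> with probability at most \<open>\<epsilon>/4\<close>,
  while a non-\<open>Good\<close> image gives advantage at most \<open>\<epsilon>/4\<close>; averaging over the decoder's queries
  bounds its success probability by \<open>1/2 + \<epsilon>/2\<close>, a contradiction.
\<close>

section \<open>Insertion--deletion distance\<close>

lemma insdel_step_Cons: "insdel_step u v \<Longrightarrow> insdel_step (a # u) (a # v)"
  unfolding insdel_step_def by (metis append_Cons)

lemma insdel_relpow_Cons: "(insdel_step ^^ k) u v \<Longrightarrow> (insdel_step ^^ k) (a # u) (a # v)"
proof (induction k arbitrary: v)
  case 0
  then show ?case by simp
next
  case (Suc k)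
  then obtain w where "(insdel_step ^^ k) u w" "insdel_step w v" by auto
  then show ?case using Suc.IH insdel_step_Cons by (metis relpowp_Suc_I)
qed

lemma insdel_step_drop_hd: "insdel_step (a # u) u"
  unfolding insdel_step_def by (metis append_Nil)

lemma insdel_step_snoc: "insdel_step u (u @ [a])"
  unfolding insdel_step_def by blast

lemma insdel_relpow_subseq: "subseq z w \<Longrightarrow> (insdel_step ^^ (length w - length z)) w z"
proof (induction z w rule: list_emb.induct)
  case (list_emb_Nil ys)
  show ?case
  proof (induction ys)
    case (Cons a ys)
    then show ?case using relpowp_Suc_I2[OF insdel_step_drop_hd Cons.IH[simplified]] by simp
  qed simp
next
  case (list_emb_Cons xs ys y)
  have "length xs \<le> length ys" using list_emb_Cons.hyps list_emb_length by blast
  then have "length (y # ys) - length xs = Suc (length ys - length xs)" by simp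
  then show ?case using relpowp_Suc_I2[OF insdel_step_drop_hd list_emb_Cons.IH] by simp
next
  case (list_emb_Cons2 x y xs ys)
  then show ?case using insdel_relpow_Cons by simp
qed

lemma insdel_relpow_append: "(insdel_step ^^ length r) z (z @ r)"
proof (induction r rule: rev_induct)
  case (snoc a r)
  then show ?case using relpowp_Suc_I[OF snoc.IH insdel_step_snoc[of "z @ r" a]] by simp
qed simp

lemma ED_le_relpow: "(insdel_step ^^ k) u v \<Longrightarrow> ED u v \<le> k"
  unfolding ED_def by (rule Least_le)

lemma ED_subseq_append_le: "subseq z w \<Longrightarrow> ED w (z @ r) \<le> length w - length z + length r"
proof -
  assume "subseq z w"
  then have "(insdel_step ^^ (length w - length z) OO insdel_step ^^ length r) w (z @ r)"
    using insdel_relpow_subseq insdel_relpow_append by blast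
  then show ?thesis by (intro ED_le_relpow) (simp add: relpowp_add)
qed

lemma sorted_wrt_less_map_pred:
  "sorted_wrt (<) ns \<Longrightarrow> \<forall>j\<in>set ns. 0 < (j::nat) \<Longrightarrow> sorted_wrt (<) (map (\<lambda>j. j - 1) ns)"
  unfolding sorted_wrt_map by (erule sorted_wrt_mono_rel[rotated]) auto

lemma subseq_map_nth:
  "sorted_wrt (<) ixs \<Longrightarrow> \<forall>i\<in>set ixs. i < length w \<Longrightarrow> subseq (map ((!) w) ixs) w"
proof (induction w arbitrary: ixs)
  case Nil
  then show ?case by (cases ixs) auto
next
  case (Cons a w)
  have IH: "subseq (map ((!) (a # w)) js) w"
    if "sorted_wrt (<) js" "\<forall>j\<in>set js. 0 < j \<and> j < Suc (length w)" for js
  proof -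
    have "subseq (map ((!) w) (map (\<lambda>j. j - 1) js)) w"
      using that sorted_wrt_less_map_pred by (intro Cons.IH) auto
    moreover have "map ((!) w) (map (\<lambda>j. j - 1) js) = map ((!) (a # w)) js"
      using that(2) by (auto simp: nth_Cons')
    ultimately show ?thesis by metis
  qed
  show ?case
  proof (cases ixs)
    case (Cons i js)
    show ?thesis
    proof (cases "i = 0")
      case True
      then have "subseq (map ((!) (a # w)) js) w" using Cons.prems \<open>ixs = i # js\<close> by (intro IH) auto
      then show ?thesis using \<open>ixs = i # js\<close> True by simp
    next
      case False
      then have "subseq (map ((!) (a # w)) ixs) w" using Cons.prems \<open>ixs = i # js\<close> by (intro IH) auto
      then show ?thesis by (rule list_emb_Cons)
    qed
  qed simp
qed

lemma strict_mono_on_add_diff_le: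
  fixes f :: "nat \<Rightarrow> nat"
  assumes mono: "\<And>x y. x < y \<Longrightarrow> y < m \<Longrightarrow> f x < f y" and "x \<le> y" "y < m"
  shows "f x + (y - x) \<le> f y"
  using assms(2,3)
proof (induction y)
  case (Suc y)
  then show ?case using mono[of y "Suc y"] by (cases "x = Suc y") auto
qed simp

text \<open>Reading a word of length \<open>m\<close> through a strictly increasing index map that shifts
  positions by at most \<open>E\<close>: the reads that stay inside \<open>w\<close> form a prefix and a
  subsequence of \<open>w\<close>, and at most \<open>E\<close> reads fall beyond it.\<close>

lemma ED_read_strict_mono_le:
  fixes w v :: "'a list" and \<pi> :: "nat \<Rightarrow> nat"
  assumes len: "length w = m"
    and mono: "\<And>x y. x < y \<Longrightarrow> y < m \<Longrightarrow> \<pi> x < \<pi> y"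
    and shift: "\<And>p. p < m \<Longrightarrow> \<pi> p \<le> p + E"
  shows "ED w (map (\<lambda>p. (w @ v) ! \<pi> p) [0..<m]) \<le> 2 * E"
proof -
  define p0 where "p0 = (LEAST p. p = m \<or> m \<le> \<pi> p)"
  have p0m: "p0 \<le> m" unfolding p0_def by (rule Least_le) simp
  have inside: "\<pi> p < m" if "p < p0" for p
    using not_less_Least[OF that[unfolded p0_def]] p0m that unfolding p0_def by auto
  have outside: "m - p0 \<le> E"
  proof (cases "p0 < m")
    case True
    then have "m \<le> \<pi> p0" using LeastI[of "\<lambda>p. p = m \<or> m \<le> \<pi> p" m] unfolding p0_def by auto
    moreover have "\<pi> p0 + (m - 1 - p0) \<le> \<pi> (m - 1)"
      using True by (intro strict_mono_on_add_diff_le[OF mono]) auto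
    moreover have "\<pi> (m - 1) \<le> m - 1 + E" using shift[of "m - 1"] True by simp
    ultimately show ?thesis using True by linarith
  qed simp
  define z where "z = map (\<lambda>p. w ! \<pi> p) [0..<p0]"
  define rest where "rest = map (\<lambda>p. (w @ v) ! \<pi> p) [p0..<m]"
  have "[0..<m] = [0..<p0] @ [p0..<m]" using p0m upt_add_eq_append[of 0 p0 "m - p0"] by simp
  then have split: "map (\<lambda>p. (w @ v) ! \<pi> p) [0..<m] = z @ rest"
    unfolding z_def rest_def using inside len by (auto simp: nth_append)
  have "subseq z w"
    unfolding z_def using subseq_map_nth[of "map \<pi> [0..<p0]" w] mono inside p0m len
    by (auto simp: sorted_wrt_map sorted_wrt_iff_nth_less comp_def)
  then have "ED w (z @ rest) \<le> length w - length z + length rest"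
    by (rule ED_subseq_append_le)
  also have "\<dots> \<le> 2 * E" unfolding z_def rest_def using len outside by simp
  finally show ?thesis using split by simp
qed

lemma lists_nth_in_Suc:
  "{ds. length ds = Suc k \<and> (\<forall>l<Suc k. ds!l \<in> F l)} =
   (\<lambda>(d,ds). d # ds) ` (F 0 \<times> {ds. length ds = k \<and> (\<forall>l<k. ds!l \<in> F (Suc l))})"
proof (intro set_eqI iffI)
  fix ds assume a: "ds \<in> {ds. length ds = Suc k \<and> (\<forall>l<Suc k. ds!l \<in> F l)}"
  then obtain d ds' where e: "ds = d # ds'" by (cases ds) auto
  have "length ds' = k" "d \<in> F 0" using a e by auto
  moreover have "\<forall>l<k. ds'!l \<in> F (Suc l)"
  proof (intro allI impI)
    fix l assume "l < k"
    then have "ds ! Suc l \<in> F (Suc l)" using a by simp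
    then show "ds'!l \<in> F (Suc l)" using e by simp
  qed
  ultimately have "(d, ds') \<in> F 0 \<times> {ds. length ds = k \<and> (\<forall>l<k. ds!l \<in> F (Suc l))}" by simp
  then show "ds \<in> (\<lambda>(d,ds). d # ds) ` (F 0 \<times> {ds. length ds = k \<and> (\<forall>l<k. ds!l \<in> F (Suc l))})"
    using e by (simp add: image_iff)
next
  fix ds assume "ds \<in> (\<lambda>(d,ds). d # ds) ` (F 0 \<times> {ds. length ds = k \<and> (\<forall>l<k. ds!l \<in> F (Suc l))})"
  then obtain d ds' where e: "ds = d # ds'" "d \<in> F 0" "length ds' = k" "\<forall>l<k. ds'!l \<in> F (Suc l)"
    by auto
  have "\<forall>l<Suc k. ds!l \<in> F l"
  proof (intro allI impI)
    fix l assume "l < Suc k"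
    then show "ds ! l \<in> F l" using e by (cases l) auto
  qed
  then show "ds \<in> {ds. length ds = Suc k \<and> (\<forall>l<Suc k. ds!l \<in> F l)}" using e by simp
qed

lemma card_lists_nth_in:
  assumes "\<And>l. l < k \<Longrightarrow> finite (F l)"
  shows "finite {ds. length ds = k \<and> (\<forall>l<k. ds!l \<in> F l)} \<and>
         card {ds. length ds = k \<and> (\<forall>l<k. ds!l \<in> F l)} = (\<Prod>l<k. card (F l))"
  using assms
proof (induction k arbitrary: F)
  case 0 then show ?case by simp
next
  case (Suc k)
  have IH: "finite {ds. length ds = k \<and> (\<forall>l<k. ds!l \<in> F (Suc l))} \<and>
         card {ds. length ds = k \<and> (\<forall>l<k. ds!l \<in> F (Suc l))} = (\<Prod>l<k. card (F (Suc l)))"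
    using Suc.IH[of "\<lambda>l. F (Suc l)"] Suc.prems by simp
  have inj: "inj_on (\<lambda>(d,ds). d # ds) (F 0 \<times> {ds. length ds = k \<and> (\<forall>l<k. ds!l \<in> F (Suc l))})"
    by (auto simp: inj_on_def)
  have f0: "finite (F 0)" using Suc.prems by simp
  show ?case unfolding lists_nth_in_Suc
    using IH f0 inj by (simp add: card_image card_cartesian_product prod.lessThan_Suc_shift del: prod.lessThan_Suc)
qed

lemma real_div_gt: "real a / real m < real (a div m) + 1"
  using floor_divide_of_nat_eq[of a m] by (metis real_of_int_floor_add_one_gt of_int_of_nat_eq)

lemma less_Suc_div_mult: "0 < k \<Longrightarrow> x < (x div k + 1) * (k::nat)"
  using dividend_less_times_div[of k x] by (simp add: algebra_simps)

lemma card_multiples_between_le: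
  fixes x y k :: nat
  assumes "0 < k" "x \<le> y"
  shows "real (card {b. x < b * k \<and> b * k \<le> y}) \<le> real (y - x) / k + 1"
proof -
  have eq: "{b. x < b * k \<and> b * k \<le> y} = {x div k + 1 .. y div k}"
  proof (intro set_eqI iffI)
    fix b assume "b \<in> {b. x < b * k \<and> b * k \<le> y}"
    then have "x < b * k" "b * k \<le> y" by auto
    then have "x div k < b" "b \<le> y div k" using assms
      by (simp_all add: div_less_iff_less_mult less_eq_div_iff_mult_less_eq)
    then show "b \<in> {x div k + 1 .. y div k}" by simp
  next
    fix b assume "b \<in> {x div k + 1 .. y div k}"
    then have "x div k < b" "b \<le> y div k" by auto
    then have "x < b * k" "b * k \<le> y" using assms
      by (simp_all add: div_less_iff_less_mult less_eq_div_iff_mult_less_eq)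
    then show "b \<in> {b. x < b * k \<and> b * k \<le> y}" by simp
  qed
  have "card {b. x < b * k \<and> b * k \<le> y} = y div k - x div k" unfolding eq by simp
  moreover have "real (y div k - x div k) \<le> real (y - x) / k + 1"
  proof -
    have "y div k * k \<le> y" by simp
    then have a: "real (y div k) * k \<le> y" by (simp only: of_nat_mult[symmetric] of_nat_le_iff)
    have b: "real x < (real (x div k) + 1) * k"
    proof -
      have "x < (x div k + 1) * k" using assms(1) by (rule less_Suc_div_mult)
      then have "real x < real ((x div k + 1) * k)" by (simp only: of_nat_less_iff)
      then show ?thesis by (simp add: algebra_simps)
    qed
    have "x div k \<le> y div k" using assms by (simp add: div_le_mono)
    then have "real (y div k - x div k) = real (y div k) - real (x div k)" by simp
    moreover have "(real (y div k) - real (x div k)) * k \<le> real (y - x) + k"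
      using a b assms by (simp add: algebra_simps)
    ultimately show ?thesis using assms by (simp add: field_simps)
  qed
  ultimately show ?thesis by simp
qed

lemma card_multiples_below_le:
  fixes k m :: nat
  assumes "0 < k"
  shows "card {b. 1 \<le> b \<and> b * k < m} * k \<le> m"
proof -
  have sub: "{b. 1 \<le> b \<and> b * k < m} \<subseteq> {1 .. (m - 1) div k}"
  proof
    fix b assume "b \<in> {b. 1 \<le> b \<and> b * k < m}"
    then have "1 \<le> b" "b * k \<le> m - 1" by auto
    then show "b \<in> {1 .. (m - 1) div k}" using assms by (simp add: less_eq_div_iff_mult_less_eq)
  qed
  have "card {b. 1 \<le> b \<and> b * k < m} \<le> (m - 1) div k"
    using card_mono[OF _ sub] by simp
  then have "card {b. 1 \<le> b \<and> b * k < m} * k \<le> (m - 1) div k * k" by simp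
  also have "\<dots> \<le> m - 1" by simp
  finally show ?thesis by simp
qed

lemma mult_div_diff_near:
  fixes x y m r :: nat
  assumes "x \<le> y"
  shows "\<bar>real ((r * y) div m - (r * x) div m) - real r * real (y - x) / real m\<bar> < 1"
proof -
  have "(r * x) div m \<le> (r * y) div m" using assms by (simp add: div_le_mono)
  moreover have "real r * real (y - x) / real m = real (r * y) / real m - real (r * x) / real m"
    using assms by (simp add: of_nat_diff diff_divide_distrib algebra_simps)
  moreover have "real ((r * y) div m) \<le> real (r * y) / m" "real ((r * x) div m) \<le> real (r * x) / m"
    by (rule of_nat_div_le_of_nat)+
  moreover have "real (r * y) / m < real ((r * y) div m) + 1" "real (r * x) / m < real ((r * x) div m) + 1"
    by (rule real_div_gt)+
  ultimately show ?thesis by (simp add: of_nat_diff abs_less_iff)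
qed

lemma card_div_diff_eq_le:
  fixes x y m R :: nat and W :: nat
  assumes "x < y" "0 < m"
  shows "real (card {r. r < R \<and> (r * y) div m - (r * x) div m = W}) \<le> 2 * real m / real (y - x) + 1"
proof -
  define S where "S = {r. r < R \<and> (r * y) div m - (r * x) div m = W}"
  define g where "g = y - x"
  have gpos: "0 < g" using assms g_def by simp
  have bnds: "real r * g / m - 1 < real ((r * y) div m - (r * x) div m) \<and>
              real ((r * y) div m - (r * x) div m) < real r * g / m + 1" for r
    using mult_div_diff_near[of x y r m] assms unfolding g_def by (simp add: abs_less_iff)
  show ?thesis
  proof (cases "S = {}")
    case True then show ?thesis unfolding S_def[symmetric] by simp
  next
    case False
    have fin: "finite S" unfolding S_def by simp
    define r0 where "r0 = Min S"
    have r0S: "r0 \<in> S" using Min_in[OF fin False] r0_def by simp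
    have close: "real (r - r0) < 2 * real m / g" if "r \<in> S" for r
    proof -
      have "r0 \<le> r" using Min_le[OF fin that] r0_def by simp
      have "real r * g / m - 1 < W" using bnds[of r] that unfolding S_def by simp
      moreover have "W < real r0 * g / m + 1" using bnds[of r0] r0S unfolding S_def by simp
      ultimately have "real r * g / m - real r0 * g / m < 2" by linarith
      moreover have "(real r - real r0) * g / m = real r * g / m - real r0 * g / m"
        by (simp add: algebra_simps diff_divide_distrib)
      ultimately have "(real r - real r0) * g / m < 2" by linarith
      then have "(real r - real r0) * g < 2 * m" using assms by (simp add: field_simps)
      then show ?thesis using gpos \<open>r0 \<le> r\<close> by (simp add: field_simps of_nat_diff)
    qed
    define N where "N = nat \<lceil>2 * real m / g\<rceil>"
    have "S \<subseteq> {r0 ..< r0 + N}"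
    proof
      fix r assume "r \<in> S"
      then have "r0 \<le> r" using Min_le[OF fin] r0_def by simp
      moreover have "r - r0 < N" using close[OF \<open>r \<in> S\<close>] unfolding N_def by linarith
      ultimately show "r \<in> {r0 ..< r0 + N}" by simp
    qed
    then have cS: "card S \<le> N" using card_mono[of "{r0 ..< r0 + N}" S] by simp
    have "0 \<le> 2 * real m / g" by simp
    then have "real N \<le> 2 * real m / g + 1" unfolding N_def by linarith
    moreover have "real (card S) \<le> real N" using cS by simp
    ultimately show ?thesis unfolding S_def g_def by (meson order_trans)
  qed
qed

lemma mult_div_diff_le: "(r * y) div m - (r * x) div m \<le> (r * (y - x)) div m + 1" if "x \<le> y" for r x y m :: nat
proof -
  have e: "r * y = r * x + r * (y - x)" using that by (simp add: diff_mult_distrib2)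
  have d: "(r*x + r*(y-x)) div m = (r*x) div m + (r*(y-x)) div m + ((r*x) mod m + (r*(y-x)) mod m) div m"
    by (rule div_add1_eq)
  have "((r*x) mod m + (r*(y-x)) mod m) div m \<le> 1"
  proof (cases "m = 0")
    case True then show ?thesis by simp
  next
    case False
    then have "(r*x) mod m < m" "(r*(y-x)) mod m < m" by simp_all
    then have "(r*x) mod m + (r*(y-x)) mod m < 2 * m" by linarith
    then have "((r*x) mod m + (r*(y-x)) mod m) div m < 2" by (simp add: less_mult_imp_div_less)
    then show ?thesis by simp
  qed
  then show ?thesis using d e by simp
qed

lemma card_le_fibre_bound:
  fixes A :: "'a set" and f :: "'a \<Rightarrow> 'b" and N :: real
  assumes "finite A" "\<And>y. y \<in> f ` A \<Longrightarrow> real (card {a\<in>A. f a = y}) \<le> N"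
  shows "real (card A) \<le> N * card (f ` A)"
proof -
  have "A = (\<Union>y\<in>f ` A. {a\<in>A. f a = y})" by auto
  then have "card A \<le> (\<Sum>y\<in>f ` A. card {a\<in>A. f a = y})"
    by (metis card_UN_le finite_imageI assms(1))
  then have "real (card A) \<le> (\<Sum>y\<in>f ` A. real (card {a\<in>A. f a = y}))"
    by (metis of_nat_le_iff of_nat_sum)
  also have "\<dots> \<le> (\<Sum>y\<in>f ` A. N)" by (rule sum_mono) (use assms(2) in auto)
  finally show ?thesis by (simp add: mult.commute)
qed

lemma sum_power2_atMost_le: "(\<Sum>s\<le>S. (2::real) ^ s) \<le> 2 * 2 ^ S"
proof (induction S)
  case 0 then show ?case by simp
next
  case (Suc S) then show ?case by simp
qed

lemma less_nat_ceiling: "real n < x \<Longrightarrow> n < nat \<lceil>x\<rceil>"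
proof -
  assume "real n < x"
  then have "of_int (int n) < x" by simp
  then have "int n < \<lceil>x\<rceil>" by (simp only: less_ceiling_iff)
  then show ?thesis by (simp add: zless_nat_eq_int_zless)
qed

lemma power_le_mult_power_pred: "1 \<le> c \<Longrightarrow> c ^ (j - 1) \<le> v \<Longrightarrow> c ^ j \<le> c * (v::real)"
proof (cases j)
  case 0
  assume "1 \<le> c" "c ^ (j - 1) \<le> v"
  then have v1: "1 \<le> v" using 0 by simp
  have "c * 1 \<le> c * v" using v1 \<open>1 \<le> c\<close> by (intro mult_left_mono) simp_all
  then show ?thesis using 0 \<open>1 \<le> c\<close> mult_mono[of 1 c 1 v] by simp
next
  case (Suc j')
  assume "1 \<le> c" "c ^ (j - 1) \<le> v"
  then show ?thesis using Suc by (simp add: mult_left_mono)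
qed

lemma prod_lessThan_split_0: "1 \<le> (k::nat) \<Longrightarrow> (\<Prod>l<k. f l) = f 0 * (\<Prod>l\<in>{1..<k}. f l)"
proof -
  assume "1 \<le> k"
  then have "{..<k} = insert 0 {1..<k}"
  proof (intro set_eqI iffI)
    fix x assume "x \<in> {..<k}"
    then show "x \<in> insert 0 {1..<k}" by (cases x) auto
  next
    fix x assume "x \<in> insert 0 {1..<k}"
    then show "x \<in> {..<k}" using \<open>1 \<le> k\<close> by auto
  qed
  then show ?thesis by simp
qed

lemma sorted_list_of_set_image_strict_mono:
  fixes f :: "nat \<Rightarrow> nat" and A :: "nat set"
  assumes fin: "finite A" and mono: "\<And>x y. x < y \<Longrightarrow> f x < f y"
  shows "sorted_list_of_set (f ` A) = map f (sorted_list_of_set A)"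
proof -
  have s: "sorted_wrt (<) (sorted_list_of_set A)" by simp
  have s2: "sorted_wrt (<) (map f (sorted_list_of_set A))"
    unfolding sorted_wrt_map by (rule sorted_wrt_mono_rel[OF _ s]) (simp add: mono)
  have inj: "inj_on f A"
    by (rule inj_onI) (metis mono linorder_neq_iff less_irrefl)
  have st: "set (map f (sorted_list_of_set A)) = f ` A" using fin by simp
  have ln: "length (map f (sorted_list_of_set A)) = card (f ` A)"
    using fin inj by (simp add: card_image)
  show ?thesis using sorted_list_of_set_unique[of "f ` A" "map f (sorted_list_of_set A)"] fin s2 st ln
    by simp
qed

lemma obtain_superset_with_card:
  assumes "A \<subseteq> B" "finite B" "card A \<le> n" "n \<le> card B"
  obtains A' where "A \<subseteq> A'" "A' \<subseteq> B" "card A' = n"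
proof -
  have "n - card A \<le> card (B - A)"
    using assms by (simp add: card_Diff_subset finite_subset)
  then obtain T where T: "T \<subseteq> B - A" "card T = n - card A" "finite T"
    by (rule obtain_subset_with_card_n)
  have "card (A \<union> T) = card A + card T"
    using T assms by (intro card_Un_disjoint) (auto intro: finite_subset)
  then show thesis using that[of "A \<union> T"] T assms by auto
qed

lemma card_mult_le_by_averaging:
  fixes M :: "'a pmf" and I :: "'i set" and E :: "'i \<Rightarrow> 'a set" and \<beta> B :: real
  assumes fin: "finite I" and lo: "\<And>i. i \<in> I \<Longrightarrow> \<beta> \<le> measure_pmf.prob M (E i)"
    and up: "\<And>z. z \<in> set_pmf M \<Longrightarrow> real (card {i\<in>I. z \<in> E i}) \<le> B"
  shows "real (card I) * \<beta> \<le> B"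
proof -
  have intI: "integrable (measure_pmf M) (indicator (E i) :: 'a \<Rightarrow> real)" for i
    by (rule measure_pmf.integrable_const_bound[where B=1]) (auto simp: indicator_def)
  have cnt: "real (card {i\<in>I. z \<in> E i}) = (\<Sum>i\<in>I. indicator (E i) z)" for z
  proof -
    have "(\<Sum>i\<in>I. indicator (E i) z :: real) = (\<Sum>i\<in>{i\<in>I. z \<in> E i}. 1)"
      using fin by (simp add: indicator_def sum.If_cases Int_def)
    then show ?thesis by simp
  qed
  have "real (card I) * \<beta> = (\<Sum>i\<in>I. \<beta>)" by simp
  also have "\<dots> \<le> (\<Sum>i\<in>I. measure_pmf.prob M (E i))" by (rule sum_mono) (rule lo)
  also have "\<dots> = (\<Sum>i\<in>I. measure_pmf.expectation M (indicator (E i)))"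
    by (simp add: integral_indicator)
  also have "\<dots> = measure_pmf.expectation M (\<lambda>z. \<Sum>i\<in>I. indicator (E i) z)"
    using Bochner_Integration.integral_sum[of I "measure_pmf M" "\<lambda>i. indicator (E i)"] intI by simp
  also have "\<dots> = measure_pmf.expectation M (\<lambda>z. real (card {i\<in>I. z \<in> E i}))"
    by (simp add: cnt)
  also have "\<dots> \<le> B"
  proof (rule measure_pmf.integral_le_const)
    show "integrable (measure_pmf M) (\<lambda>z. real (card {i\<in>I. z \<in> E i}))"
      by (rule measure_pmf.integrable_const_bound[where B="real (card I)"])
         (auto intro!: card_mono simp: fin)
    show "AE x in measure_pmf M. real (card {i\<in>I. x \<in> E i}) \<le> B"
      using up by (simp add: AE_measure_pmf_iff)
  qed
  finally show ?thesis .
qed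

lemma card_strings: "finite (strings n) \<and> card (strings n) = 2 ^ n"
proof -
  have "strings n = {xs. set xs \<subseteq> (UNIV :: bool set) \<and> length xs = n}" unfolding strings_def by simp
  moreover have "finite {xs. set xs \<subseteq> (UNIV :: bool set) \<and> length xs = n}"
    by (rule finite_lists_length_eq) simp
  moreover have "card {xs. set xs \<subseteq> (UNIV :: bool set) \<and> length xs = n} = 2 ^ n"
    using card_lists_length_eq[of "UNIV :: bool set" n] by simp
  ultimately show ?thesis by simp
qed

definition scale_window :: "real \<Rightarrow> nat \<Rightarrow> nat set" where
  "scale_window c j = {n. c ^ (j - 1) \<le> real n \<and> real n < c ^ j}"

lemma finite_scale_window: "finite (scale_window c j)"
proof -
  have "scale_window c j \<subseteq> {..< nat \<lceil>c ^ j\<rceil>}" unfolding scale_window_def by (auto intro: less_nat_ceiling)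
  then show ?thesis using finite_subset by blast
qed

lemma Pbox_eq_windows: "Pbox c m js = {..<2*m} \<times> {ds. length ds = length js \<and> (\<forall>l<length js. ds!l \<in> scale_window c (js!l))}"
  unfolding Pbox_def scale_window_def by auto

lemma card_Pbox: "finite (Pbox c m js) \<and> card (Pbox c m js) = 2 * m * (\<Prod>l<length js. card (scale_window c (js!l)))"
proof -
  have "finite {ds. length ds = length js \<and> (\<forall>l<length js. ds!l \<in> scale_window c (js!l))} \<and>
        card {ds. length ds = length js \<and> (\<forall>l<length js. ds!l \<in> scale_window c (js!l))} = (\<Prod>l<length js. card (scale_window c (js!l)))"
    by (rule card_lists_nth_in) (rule finite_scale_window)
  then show ?thesis unfolding Pbox_eq_windows by (simp add: card_cartesian_product)
qed

lemma card_scale_window_le: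
  assumes "1 \<le> c"
  shows "real (card (scale_window c j)) \<le> c ^ j"
proof -
  define N where "N = nat \<lceil>c ^ j\<rceil>"
  have "scale_window c j \<subseteq> {1..<N}"
  proof
    fix n assume "n \<in> scale_window c j"
    then have "c ^ (j - 1) \<le> real n" "real n < c ^ j" unfolding scale_window_def by auto
    moreover have "1 \<le> c ^ (j - 1)" using assms by simp
    ultimately show "n \<in> {1..<N}" unfolding N_def using less_nat_ceiling[of n "c^j"] by auto
  qed
  then have "card (scale_window c j) \<le> N - 1" using card_mono[of "{1..<N}"] by simp
  moreover have "real N \<le> c ^ j + 1"
  proof -
    have "0 \<le> c ^ j" using assms by simp
    then have "0 \<le> \<lceil>c ^ j\<rceil>" by linarith
    then have "real N = real_of_int \<lceil>c ^ j\<rceil>" unfolding N_def by simp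
    also have "\<dots> \<le> c ^ j + 1" by (rule of_int_ceiling_le_add_one)
    finally show ?thesis .
  qed
  moreover have "real (N - 1) \<le> c ^ j"
  proof (cases "N = 0")
    case True then show ?thesis using assms by simp
  next
    case False then have "real (N - 1) = real N - 1" by simp
    then show ?thesis using \<open>real N \<le> c ^ j + 1\<close> by simp
  qed
  ultimately show ?thesis by (meson of_nat_le_iff order_trans)
qed

section \<open>The adversary\<close>

text \<open>An adversary \<open>(u, \<rho>, Y)\<close> reads \<open>C x @ r\<close> through the strictly increasing map
  \<open>warp\<close>: before position \<open>p\<close> it has inserted \<open>u\<close> symbols at the front, \<open>\<lfloor>\<rho> p / m\<rfloor>\<close>
  symbols spread evenly, and \<open>Y (s, b) \<in> [2^s/H, 2\<cdot>2^s/H]\<close> symbols at every dyadic point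
  \<open>b \<cdot> 2^s \<le> p\<close>. Randomness at all scales is what makes the gaps of a warped query set
  spread over the boxes \<open>Pbox\<close>.\<close>

type_synonym adversary = "nat \<times> nat \<times> (nat \<times> nat \<Rightarrow> nat)"

definition dyadic_pos :: "nat \<times> nat \<Rightarrow> nat" where
  "dyadic_pos z = snd z * 2 ^ fst z"

definition dyadic_blocks :: "nat \<Rightarrow> (nat \<times> nat) set" where
  "dyadic_blocks m = {z. 1 \<le> snd z \<and> dyadic_pos z < m}"

definition blocks_between :: "nat \<Rightarrow> nat \<Rightarrow> nat \<Rightarrow> (nat \<times> nat) set" where
  "blocks_between m x y = {z\<in>dyadic_blocks m. x < dyadic_pos z \<and> dyadic_pos z \<le> y}"

definition scale_unit :: "nat \<Rightarrow> nat \<Rightarrow> nat" where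
  "scale_unit H s = 2 ^ s div H"

definition ins_range :: "nat \<Rightarrow> nat \<times> nat \<Rightarrow> nat set" where
  "ins_range H z = {scale_unit H (fst z) .. 2 * scale_unit H (fst z)}"

definition adversaries :: "nat \<Rightarrow> nat \<Rightarrow> nat \<Rightarrow> nat \<Rightarrow> adversary set" where
  "adversaries m U R H = {..<U} \<times> {..<R} \<times> PiE (dyadic_blocks m) (ins_range H)"

definition inserted :: "nat \<Rightarrow> adversary \<Rightarrow> nat \<Rightarrow> nat" where
  "inserted m \<omega> p = fst \<omega> + (fst (snd \<omega>) * p) div m
     + sum (snd (snd \<omega>)) {z\<in>dyadic_blocks m. dyadic_pos z \<le> p}"

definition warp :: "nat \<Rightarrow> adversary \<Rightarrow> nat \<Rightarrow> nat" where
  "warp m \<omega> p = p + inserted m \<omega> p"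

lemma dyadic_blocks_subset: "dyadic_blocks m \<subseteq> {..<m} \<times> {..<m}"
proof
  fix z assume "z \<in> dyadic_blocks m"
  then have b: "1 \<le> snd z" "snd z * 2 ^ fst z < m" unfolding dyadic_blocks_def dyadic_pos_def by auto
  have "fst z < 2 ^ fst z" by simp
  also have "2 ^ fst z \<le> snd z * 2 ^ fst z" using b(1) by simp
  finally have "fst z < m" using b(2) by linarith
  moreover have "snd z \<le> snd z * 2 ^ fst z" by simp
  then have "snd z < m" using b(2) by linarith
  ultimately show "z \<in> {..<m} \<times> {..<m}" by (cases z) auto
qed

lemma finite_dyadic_blocks: "finite (dyadic_blocks m)"
  using dyadic_blocks_subset finite_subset by blast

lemma finite_blocks_between: "finite (blocks_between m x y)"
  unfolding blocks_between_def using finite_dyadic_blocks by simp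

lemma inserted_diff:
  assumes "x \<le> y"
  shows "inserted m \<omega> y = inserted m \<omega> x + ((fst (snd \<omega>) * y) div m - (fst (snd \<omega>) * x) div m)
          + sum (snd (snd \<omega>)) (blocks_between m x y)"
proof -
  obtain u r Y where w: "\<omega> = (u, r, Y)" by (cases \<omega>) auto
  have sp: "{z\<in>dyadic_blocks m. dyadic_pos z \<le> y} = {z\<in>dyadic_blocks m. dyadic_pos z \<le> x} \<union> blocks_between m x y"
    using assms unfolding blocks_between_def by auto
  have dj: "{z\<in>dyadic_blocks m. dyadic_pos z \<le> x} \<inter> blocks_between m x y = {}" unfolding blocks_between_def by auto
  have "sum Y {z\<in>dyadic_blocks m. dyadic_pos z \<le> y} = sum Y {z\<in>dyadic_blocks m. dyadic_pos z \<le> x} + sum Y (blocks_between m x y)"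
    unfolding sp by (rule sum.union_disjoint) (use finite_dyadic_blocks finite_blocks_between dj in auto)
  moreover have "(r * x) div m \<le> (r * y) div m" using assms by (simp add: div_le_mono)
  ultimately show ?thesis unfolding inserted_def w fst_conv snd_conv by linarith
qed

lemma inserted_mono: "x \<le> y \<Longrightarrow> inserted m \<omega> x \<le> inserted m \<omega> y"
  using inserted_diff[of x y m \<omega>] by simp

lemma warp_strict_mono: "x < y \<Longrightarrow> warp m \<omega> x < warp m \<omega> y"
  unfolding warp_def using inserted_mono[of x y m \<omega>] by simp

lemma warp_diff:
  assumes "x \<le> y"
  shows "warp m \<omega> y - warp m \<omega> x = (y - x) + ((fst (snd \<omega>) * y) div m - (fst (snd \<omega>) * x) div m)
          + sum (snd (snd \<omega>)) (blocks_between m x y)"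
  unfolding warp_def using inserted_diff[OF assms, of m \<omega>] assms by simp

lemma card_ins_range: "card (ins_range H z) = scale_unit H (fst z) + 1"
  unfolding ins_range_def by simp

lemma finite_ins_range: "finite (ins_range H z)" unfolding ins_range_def by simp

lemma card_adversaries: "card (adversaries m U R H) = U * R * (\<Prod>z\<in>dyadic_blocks m. card (ins_range H z))"
  unfolding adversaries_def by (simp add: card_cartesian_product card_PiE finite_dyadic_blocks)

lemma finite_adversaries: "finite (adversaries m U R H)"
  unfolding adversaries_def by (simp add: finite_PiE finite_dyadic_blocks finite_ins_range)

lemma prod_card_ins_range_split:
  assumes "Z \<subseteq> dyadic_blocks m"
  shows "(\<Prod>z\<in>dyadic_blocks m. card (ins_range H z)) = card (PiE (dyadic_blocks m - Z) (ins_range H)) * (\<Prod>z\<in>Z. card (ins_range H z))"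
proof -
  have "finite (dyadic_blocks m)" by (rule finite_dyadic_blocks)
  then have "(\<Prod>z\<in>dyadic_blocks m. card (ins_range H z)) = (\<Prod>z\<in>dyadic_blocks m - Z. card (ins_range H z)) * (\<Prod>z\<in>Z. card (ins_range H z))"
    using assms by (metis prod.subset_diff)
  moreover have "card (PiE (dyadic_blocks m - Z) (ins_range H)) = (\<Prod>z\<in>dyadic_blocks m - Z. card (ins_range H z))"
    using finite_dyadic_blocks by (simp add: card_PiE)
  ultimately show ?thesis by simp
qed

lemma scale_unit_le: "real (scale_unit H s) \<le> 2 ^ s / real H"
  unfolding scale_unit_def using of_nat_div_le_of_nat[of "2^s" H] by simp

lemma scale_unit_gt: "2 ^ s / real H < real (scale_unit H s) + 1"
  unfolding scale_unit_def using real_div_gt[of "2^s" H] by simp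

lemma sum_scale_unit_le_Sigma:
  assumes "Z \<subseteq> Sigma S Bs" "finite S" "\<And>s. finite (Bs s)"
  shows "(\<Sum>z\<in>Z. real (scale_unit H (fst z))) \<le> (\<Sum>s\<in>S. real (card (Bs s)) * 2 ^ s / real H)"
proof -
  have "(\<Sum>z\<in>Z. real (scale_unit H (fst z))) \<le> (\<Sum>z\<in>Z. 2 ^ fst z / real H)"
    by (rule sum_mono) (rule scale_unit_le)
  also have "\<dots> \<le> (\<Sum>z\<in>Sigma S Bs. 2 ^ fst z / real H)"
    using assms by (intro sum_mono2) auto
  also have "\<dots> = (\<Sum>s\<in>S. \<Sum>b\<in>Bs s. 2 ^ s / real H)"
    using sum.Sigma[of S Bs "\<lambda>s b. 2^s / real H"] assms by (simp add: split_def)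
  finally show ?thesis by simp
qed

lemma sum_scale_unit_dyadic_blocks_le:
  assumes NS: "\<And>s. 2 ^ s < m \<Longrightarrow> s < NS"
  shows "(\<Sum>z\<in>dyadic_blocks m. real (scale_unit H (fst z))) \<le> real NS * real m / real H"
proof -
  define Bs where "Bs s = {b. 1 \<le> b \<and> b * 2^s < m}" for s
  have "dyadic_blocks m \<subseteq> Sigma {..<NS} Bs"
  proof
    fix z assume "z \<in> dyadic_blocks m"
    then have "1 \<le> snd z" "snd z * 2 ^ fst z < m" unfolding dyadic_blocks_def dyadic_pos_def by auto
    moreover have "2 ^ fst z \<le> snd z * 2 ^ fst z" using \<open>1 \<le> snd z\<close> by simp
    ultimately have "fst z < NS" using NS by (meson le_less_trans)
    then show "z \<in> Sigma {..<NS} Bs"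
      using \<open>1 \<le> snd z\<close> \<open>snd z * 2 ^ fst z < m\<close> unfolding Bs_def by (cases z) auto
  qed
  moreover have "finite (Bs s)" for s
  proof (rule finite_subset)
    show "Bs s \<subseteq> {..<m}"
    proof
      fix b assume "b \<in> Bs s"
      have "b \<le> b * 2 ^ s" by simp
      also have "\<dots> < m" using \<open>b \<in> Bs s\<close> unfolding Bs_def by simp
      finally show "b \<in> {..<m}" by simp
    qed
  qed simp
  ultimately have "(\<Sum>z\<in>dyadic_blocks m. real (scale_unit H (fst z))) \<le> (\<Sum>s<NS. real (card (Bs s)) * 2 ^ s / real H)"
    by (intro sum_scale_unit_le_Sigma) auto
  also have "\<dots> \<le> (\<Sum>s<NS. real m / real H)"
  proof (rule sum_mono)
    fix s
    have "card (Bs s) * 2 ^ s \<le> m" unfolding Bs_def by (rule card_multiples_below_le) simp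
    then have "real (card (Bs s)) * 2 ^ s \<le> real m" by (metis of_nat_le_iff of_nat_mult of_nat_numeral of_nat_power)
    then show "real (card (Bs s)) * 2 ^ s / real H \<le> real m / real H" by (simp add: divide_right_mono)
  qed
  finally show ?thesis by simp
qed

lemma inserted_le:
  assumes w: "\<omega> \<in> adversaries m U R H" and "p \<le> m" and NS: "\<And>s. 2 ^ s < m \<Longrightarrow> s < NS"
  shows "real (inserted m \<omega> p) \<le> real U + real R + 2 * real NS * real m / real H"
proof -
  obtain u r Y where \<omega>: "\<omega> = (u, r, Y)" by (cases \<omega>) auto
  have "u < U" "r < R" and Y: "Y \<in> PiE (dyadic_blocks m) (ins_range H)" using w \<omega> unfolding adversaries_def by auto
  have "(r * p) div m \<le> (r * m) div m" using \<open>p \<le> m\<close> by (intro div_le_mono) simp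
  also have "\<dots> \<le> r" by (cases "m = 0") simp_all
  finally have dilation: "(r * p) div m \<le> r" .
  have "sum Y {z\<in>dyadic_blocks m. dyadic_pos z \<le> p} \<le> sum Y (dyadic_blocks m)"
    by (rule sum_mono2) (auto simp: finite_dyadic_blocks)
  also have "\<dots> \<le> (\<Sum>z\<in>dyadic_blocks m. 2 * scale_unit H (fst z))"
    using Y by (intro sum_mono) (auto simp: PiE_iff ins_range_def)
  finally have "real (sum Y {z\<in>dyadic_blocks m. dyadic_pos z \<le> p}) \<le> 2 * (\<Sum>z\<in>dyadic_blocks m. real (scale_unit H (fst z)))"
    by (simp add: sum_distrib_left[symmetric] of_nat_sum[symmetric] del: of_nat_sum)
  also have "\<dots> \<le> 2 * (real NS * real m / real H)"
    using sum_scale_unit_dyadic_blocks_le[where m=m and NS=NS and H=H, OF NS] by linarith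
  finally have blocks: "real (sum Y {z\<in>dyadic_blocks m. dyadic_pos z \<le> p}) \<le> 2 * real NS * real m / real H"
    by simp
  have "real (inserted m \<omega> p) = real u + real ((r * p) div m) + real (sum Y {z\<in>dyadic_blocks m. dyadic_pos z \<le> p})"
    unfolding inserted_def \<omega> by simp
  moreover have "real u \<le> real U" "real ((r * p) div m) \<le> real R"
    using \<open>u < U\<close> \<open>r < R\<close> dilation by simp_all
  ultimately show ?thesis using blocks by linarith
qed

lemma card_adversaries_pos: "1 \<le> U \<Longrightarrow> 1 \<le> R \<Longrightarrow> 0 < card (adversaries m U R H)"
proof -
  assume "1 \<le> U" "1 \<le> R"
  moreover have "0 < (\<Prod>z\<in>dyadic_blocks m. card (ins_range H z))" by (rule prod_pos) (simp add: card_ins_range)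
  ultimately show ?thesis unfolding card_adversaries by simp
qed

section \<open>Warping a query set\<close>

locale query_gaps =
  fixes m U R H :: nat and a :: "nat list" and k :: nat
  assumes len: "length a = Suc k" and kpos: "1 \<le> k"
    and srt: "sorted_wrt (<) a" and lt: "\<forall>x\<in>set a. x < m"
    and Hpos: "0 < H"
begin

definition gap_blocks :: "nat \<Rightarrow> (nat \<times> nat) set" where
  "gap_blocks l = blocks_between m (a!l) (a!Suc l)"

definition gap :: "nat \<Rightarrow> nat" where
  "gap l = a!Suc l - a!l"

definition top_block :: "nat \<Rightarrow> nat \<times> nat" where
  "top_block l = (SOME z. z \<in> gap_blocks l \<and> (\<forall>z'\<in>gap_blocks l. fst z' \<le> fst z))"

definition top_unit :: "nat \<Rightarrow> nat" where
  "top_unit l = scale_unit H (fst (top_block l))"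

definition base_ins :: "nat \<Rightarrow> nat" where
  "base_ins l = (\<Sum>z\<in>gap_blocks l. scale_unit H (fst z))"

definition dilation_ins :: "nat \<Rightarrow> nat \<Rightarrow> nat" where
  "dilation_ins r l = (r * a!Suc l) div m - (r * a!l) div m"

definition warped_gap :: "adversary \<Rightarrow> nat \<Rightarrow> nat" where
  "warped_gap \<omega> l = warp m \<omega> (a!Suc l) - warp m \<omega> (a!l)"

definition warped_tuple :: "adversary \<Rightarrow> nat \<times> nat list" where
  "warped_tuple \<omega> = (warp m \<omega> (a!0), map (warped_gap \<omega>) [0..<k])"

lemma query_less_Suc: "l < k \<Longrightarrow> a!l < a!Suc l"
  using srt len by (simp add: sorted_wrt_iff_nth_less)

lemma query_strict_mono: "i < j \<Longrightarrow> j \<le> k \<Longrightarrow> a!i < a!j"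
  using srt len by (simp add: sorted_wrt_iff_nth_less)

lemma query_less_m: "i \<le> k \<Longrightarrow> a!i < m"
  using lt len by (simp add: nth_mem)

lemma gap_pos: "l < k \<Longrightarrow> 0 < gap l"
  unfolding gap_def using query_less_Suc by simp

lemma gap_blocks_disjoint: "l < k \<Longrightarrow> l' < k \<Longrightarrow> l \<noteq> l' \<Longrightarrow> gap_blocks l \<inter> gap_blocks l' = {}"
proof -
  assume h: "l < k" "l' < k" "l \<noteq> l'"
  show ?thesis
  proof (cases "l < l'")
    case True
    then have "a!Suc l \<le> a!l'"
      using query_strict_mono[of "Suc l" l'] h by (cases "Suc l = l'") auto
    then show ?thesis unfolding gap_blocks_def blocks_between_def by auto
  next
    case False
    then have "l' < l" using h by simp
    then have "a!Suc l' \<le> a!l"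
      using query_strict_mono[of "Suc l'" l] h by (cases "Suc l' = l") auto
    then show ?thesis unfolding gap_blocks_def blocks_between_def by auto
  qed
qed

lemma gap_blocks_subset: "gap_blocks l \<subseteq> dyadic_blocks m" unfolding gap_blocks_def blocks_between_def by auto

lemma finite_gap_blocks: "finite (gap_blocks l)" unfolding gap_blocks_def by (rule finite_blocks_between)

lemma gap_blocks_large:
  assumes "l < k"
  shows "\<exists>z\<in>gap_blocks l. gap l < 2 * 2 ^ fst z"
proof -
  define s where "s = (LEAST s. gap l < 2 ^ Suc s)"
  have ex: "\<exists>s. gap l < 2 ^ Suc s" by (metis less_exp power_Suc2 less_trans_Suc mult_2_right
      trans_less_add2 lessI)
  have s1: "gap l < 2 ^ Suc s" unfolding s_def using LeastI_ex[OF ex] .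
  have s2: "2 ^ s \<le> gap l"
  proof (cases s)
    case 0 then show ?thesis using gap_pos[OF assms] by simp
  next
    case (Suc s')
    have "\<not> gap l < 2 ^ Suc s'" using not_less_Least[of s' "\<lambda>s. gap l < 2 ^ Suc s"] Suc s_def by simp
    then show ?thesis using Suc by simp
  qed
  define b where "b = a!l div 2^s + 1"
  have "a!l < b * 2^s" unfolding b_def by (rule less_Suc_div_mult) simp
  moreover have "b * 2^s \<le> a!l + 2^s" unfolding b_def by (simp add: algebra_simps)
  ultimately have bz: "a!l < dyadic_pos (s,b)" "dyadic_pos (s,b) \<le> a!Suc l"
    using s2 unfolding dyadic_pos_def gap_def by auto
  moreover have "dyadic_pos (s,b) < m" using bz query_less_m[of "Suc l"] assms by simp
  moreover have "1 \<le> b" unfolding b_def by simp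
  ultimately have "(s,b) \<in> gap_blocks l" unfolding gap_blocks_def blocks_between_def dyadic_blocks_def by simp
  moreover have "gap l < 2 * 2 ^ s" using s1 by simp
  ultimately show ?thesis by force
qed

lemma top_block:
  assumes "l < k"
  shows "top_block l \<in> gap_blocks l" "\<And>z'. z' \<in> gap_blocks l \<Longrightarrow> fst z' \<le> fst (top_block l)" "gap l < 2 * 2 ^ fst (top_block l)"
proof -
  have ne: "gap_blocks l \<noteq> {}" using gap_blocks_large[OF assms] by auto
  define S where "S = Max (fst ` gap_blocks l)"
  have "S \<in> fst ` gap_blocks l" unfolding S_def using ne finite_gap_blocks by simp
  then obtain z where z: "z \<in> gap_blocks l" "fst z = S" by auto
  have "\<forall>z'\<in>gap_blocks l. fst z' \<le> fst z" using z finite_gap_blocks S_def by simp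
  then have ex: "\<exists>z. z \<in> gap_blocks l \<and> (\<forall>z'\<in>gap_blocks l. fst z' \<le> fst z)" using z by blast
  have P: "top_block l \<in> gap_blocks l \<and> (\<forall>z'\<in>gap_blocks l. fst z' \<le> fst (top_block l))"
    unfolding top_block_def by (rule someI_ex[OF ex])
  then show "top_block l \<in> gap_blocks l" "\<And>z'. z' \<in> gap_blocks l \<Longrightarrow> fst z' \<le> fst (top_block l)" by auto
  obtain z0 where "z0 \<in> gap_blocks l" "gap l < 2 * 2 ^ fst z0" using gap_blocks_large[OF assms] by blast
  moreover have "fst z0 \<le> fst (top_block l)" using P \<open>z0 \<in> gap_blocks l\<close> by simp
  ultimately show "gap l < 2 * 2 ^ fst (top_block l)"
    by (meson less_le_trans mult_le_mono2 power_increasing_iff one_less_numeral_iff semiring_norm(76))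
qed

lemma inj_on_top_block: "inj_on top_block {..<k}"
proof (rule inj_onI)
  fix l l' assume "l \<in> {..<k}" "l' \<in> {..<k}" "top_block l = top_block l'"
  then show "l = l'" using gap_blocks_disjoint[of l l'] top_block(1)[of l] top_block(1)[of l'] by auto
qed

lemma warped_gap_eq:
  assumes "l < k"
  shows "warped_gap \<omega> l = gap l + dilation_ins (fst (snd \<omega>)) l + sum (snd (snd \<omega>)) (gap_blocks l)"
  unfolding warped_gap_def gap_def dilation_ins_def gap_blocks_def using warp_diff[of "a!l" "a!Suc l" m \<omega>] query_less_Suc[OF assms] by simp

definition fibre :: "nat \<times> nat list \<Rightarrow> adversary set" where
  "fibre p = {\<omega>\<in>adversaries m U R H. warped_tuple \<omega> = p}"

lemma gap_blocks_disjoint_top_blocks: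
  assumes "l < k" "L \<subseteq> {..<k}" "l \<notin> L"
  shows "gap_blocks l \<inter> top_block ` L = {}"
proof -
  have "gap_blocks l \<inter> gap_blocks l' = {}" if "l' \<in> L" for l'
    using gap_blocks_disjoint[of l l'] assms that by auto
  then show ?thesis using top_block(1) assms(2) by blast
qed

lemma gap_block_notin_top_blocks:
  assumes "l < k" "L \<subseteq> {..<k}" "z \<in> gap_blocks l" "z \<noteq> top_block l"
  shows "z \<notin> top_block ` L"
proof
  assume "z \<in> top_block ` L"
  then obtain l' where l': "l' \<in> L" "z = top_block l'" by auto
  then have "z \<in> gap_blocks l'" "l' < k" using top_block(1) assms(2) by auto
  then show False using gap_blocks_disjoint[of l l'] assms l' by auto
qed

lemma top_block_determined:
  fixes Y Y' :: "nat \<times> nat \<Rightarrow> nat"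
  assumes "l < k" "sum Y (gap_blocks l) = sum Y' (gap_blocks l)"
    and "\<And>z. z \<in> gap_blocks l - {top_block l} \<Longrightarrow> Y z = Y' z"
  shows "Y (top_block l) = Y' (top_block l)"
proof -
  have "sum Y (gap_blocks l - {top_block l}) = sum Y' (gap_blocks l - {top_block l})"
    using assms(3) by (rule sum.cong[OF refl])
  moreover have "sum Y (gap_blocks l) = Y (top_block l) + sum Y (gap_blocks l - {top_block l})"
    and "sum Y' (gap_blocks l) = Y' (top_block l) + sum Y' (gap_blocks l - {top_block l})"
    using sum.remove[OF finite_gap_blocks top_block(1)[OF assms(1)]] by simp_all
  ultimately show ?thesis using assms(2) by simp
qed

text \<open>Given \<open>\<rho>\<close>, each gap of the warped tuple fixes the insertions at its top block once
  all other insertions are known, and the first warped point then fixes \<open>u\<close>.\<close>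

lemma adversary_determined:
  assumes w: "\<omega> \<in> adversaries m U R H" "\<omega>' \<in> adversaries m U R H" and t: "warped_tuple \<omega> = warped_tuple \<omega>'"
    and r: "fst (snd \<omega>) = fst (snd \<omega>')" and L: "L \<subseteq> {..<k}"
    and out: "\<forall>z\<in>dyadic_blocks m - top_block ` L. snd (snd \<omega>) z = snd (snd \<omega>') z"
  shows "\<omega> = \<omega>'"
proof -
  obtain u \<rho> Y where \<omega>: "\<omega> = (u, \<rho>, Y)" by (cases \<omega>) auto
  obtain u' Y' where \<omega>': "\<omega>' = (u', \<rho>, Y')" using r \<omega> by (cases \<omega>') auto
  have Y: "Y \<in> PiE (dyadic_blocks m) (ins_range H)" "Y' \<in> PiE (dyadic_blocks m) (ins_range H)"
    using w \<omega> \<omega>' unfolding adversaries_def by auto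
  have "warped_gap \<omega> l = warped_gap \<omega>' l" if "l < k" for l
    using t that unfolding warped_tuple_def by (simp add: map_eq_conv)
  then have sums: "sum Y (gap_blocks l) = sum Y' (gap_blocks l)" if "l < k" for l
    using warped_gap_eq[OF that, of \<omega>] warped_gap_eq[OF that, of \<omega>'] that \<omega> \<omega>' by simp
  have "Y (top_block l) = Y' (top_block l)" if "l \<in> L" for l
  proof (rule top_block_determined)
    show "l < k" using L that by auto
    then show "sum Y (gap_blocks l) = sum Y' (gap_blocks l)" by (rule sums)
    show "Y z = Y' z" if "z \<in> gap_blocks l - {top_block l}" for z
    proof -
      have "z \<in> dyadic_blocks m - top_block ` L"
        using gap_block_notin_top_blocks[OF \<open>l < k\<close> L] gap_blocks_subset that by blast
      then show ?thesis using out \<omega> \<omega>' by simp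
    qed
  qed
  then have "Y = Y'" using out \<omega> \<omega>' by (intro PiE_ext[OF Y]) auto
  moreover have "warp m \<omega> (a!0) = warp m \<omega>' (a!0)" using t unfolding warped_tuple_def by simp
  ultimately show ?thesis using \<omega> \<omega>' unfolding warp_def inserted_def by simp
qed

lemma adversariesD:
  assumes "\<omega> \<in> adversaries m U R H"
  shows "fst \<omega> < U" "fst (snd \<omega>) < R" "snd (snd \<omega>) \<in> PiE (dyadic_blocks m) (ins_range H)"
  using assms unfolding adversaries_def by auto

lemma restrict_in_PiE_diff: "Y \<in> PiE (dyadic_blocks m) (ins_range H) \<Longrightarrow> restrict Y (dyadic_blocks m - Z) \<in> PiE (dyadic_blocks m - Z) (ins_range H)"
  by (auto simp: PiE_iff)

lemma prod_card_top_blocks: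
  assumes "L \<subseteq> {..<k}"
  shows "(\<Prod>z\<in>top_block ` L. card (ins_range H z)) = (\<Prod>l\<in>L. top_unit l + 1)"
proof -
  have "inj_on top_block L" using inj_on_top_block inj_on_subset assms by blast
  then show ?thesis by (simp add: prod.reindex card_ins_range top_unit_def)
qed

lemma top_block_image_subset: "L \<subseteq> {..<k} \<Longrightarrow> top_block ` L \<subseteq> dyadic_blocks m"
  using top_block(1) gap_blocks_subset by blast

lemma card_adversaries_split:
  assumes "L \<subseteq> {..<k}"
  shows "card (adversaries m U R H)
           = U * R * card (PiE (dyadic_blocks m - top_block ` L) (ins_range H)) * (\<Prod>l\<in>L. top_unit l + 1)"
proof -
  have "(\<Prod>z\<in>dyadic_blocks m. card (ins_range H z))
      = card (PiE (dyadic_blocks m - top_block ` L) (ins_range H)) * (\<Prod>z\<in>top_block ` L. card (ins_range H z))"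
    using assms by (rule prod_card_ins_range_split[OF top_block_image_subset])
  then show ?thesis unfolding card_adversaries prod_card_top_blocks[OF assms] by simp
qed

text \<open>By \<open>adversary_determined\<close>, a fibre injects into the choices of \<open>\<rho>\<close> and of the insertions
  off the top blocks.\<close>

lemma card_fibre_le_by_top_blocks:
  "real (card (fibre p)) * U * (\<Prod>l<k. real (top_unit l) + 1) \<le> card (adversaries m U R H)"
proof -
  define Z where "Z = top_block ` {..<k}"
  define \<phi> where "\<phi> \<omega> = (fst (snd \<omega>), restrict (snd (snd \<omega>)) (dyadic_blocks m - Z))" for \<omega> :: adversary
  have "inj_on \<phi> (fibre p)"
  proof (rule inj_onI)
    fix \<omega> \<omega>' assume h: "\<omega> \<in> fibre p" "\<omega>' \<in> fibre p" "\<phi> \<omega> = \<phi> \<omega>'"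
    then have "\<forall>z\<in>dyadic_blocks m - Z. snd (snd \<omega>) z = snd (snd \<omega>') z"
      unfolding \<phi>_def by (metis prod.inject restrict_apply')
    then show "\<omega> = \<omega>'" using adversary_determined[of \<omega> \<omega>' "{..<k}"] h unfolding fibre_def \<phi>_def Z_def by auto
  qed
  then have "card (fibre p) = card (\<phi> ` fibre p)" by (simp add: card_image)
  also have "\<dots> \<le> card ({..<R} \<times> PiE (dyadic_blocks m - Z) (ins_range H))"
  proof (rule card_mono)
    show "finite ({..<R} \<times> PiE (dyadic_blocks m - Z) (ins_range H))"
      by (simp add: finite_PiE finite_dyadic_blocks finite_ins_range)
    show "\<phi> ` fibre p \<subseteq> {..<R} \<times> PiE (dyadic_blocks m - Z) (ins_range H)"
      using adversariesD restrict_in_PiE_diff unfolding \<phi>_def fibre_def by fastforce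
  qed
  finally have "card (fibre p) * U * (\<Prod>l<k. top_unit l + 1)
      \<le> R * card (PiE (dyadic_blocks m - Z) (ins_range H)) * U * (\<Prod>l<k. top_unit l + 1)"
    by (simp add: card_cartesian_product)
  also have "\<dots> = card (adversaries m U R H)"
    using card_adversaries_split[of "{..<k}"] unfolding Z_def by (simp add: ac_simps)
  finally have "real (card (fibre p) * U * (\<Prod>l<k. top_unit l + 1)) \<le> real (card (adversaries m U R H))"
    by (simp only: of_nat_le_iff)
  then show ?thesis by (simp add: of_nat_prod add.commute)
qed

lemma card_fibre_slice_le:
  defines "Z \<equiv> top_block ` {1..<k}"
  shows "real (card {\<omega> \<in> fibre p. restrict (snd (snd \<omega>)) (dyadic_blocks m - Z) = y})
           \<le> 2 * real m / real (gap 0) + 1"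
proof (cases "{\<omega> \<in> fibre p. restrict (snd (snd \<omega>)) (dyadic_blocks m - Z) = y} = {}")
  case False
  define F where "F = {\<omega> \<in> fibre p. restrict (snd (snd \<omega>)) (dyadic_blocks m - Z) = y}"
  have k0: "0 < k" using kpos by simp
  have m0: "0 < m" using query_less_m[of 0] by simp
  have same: "snd (snd \<omega>) z = snd (snd \<omega>') z" if "\<omega> \<in> F" "\<omega>' \<in> F" "z \<in> dyadic_blocks m - Z" for \<omega> \<omega>' z
  proof -
    have "restrict (snd (snd \<omega>)) (dyadic_blocks m - Z) = restrict (snd (snd \<omega>')) (dyadic_blocks m - Z)"
      using that(1,2) unfolding F_def by simp
    then show ?thesis using that(3) by (metis restrict_apply')
  qed
  have "gap_blocks 0 \<inter> top_block ` {1..<k} = {}"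
    by (rule gap_blocks_disjoint_top_blocks) (use k0 in auto)
  then have first_blocks: "gap_blocks 0 \<subseteq> dyadic_blocks m - Z"
    using gap_blocks_subset unfolding Z_def by blast
  obtain \<omega>0 where \<omega>0: "\<omega>0 \<in> F" using False unfolding F_def by blast
  define W where "W = dilation_ins (fst (snd \<omega>0)) 0"
  have inj: "inj_on (\<lambda>\<omega>. fst (snd \<omega>)) F"
  proof (rule inj_onI)
    fix \<omega> \<omega>' assume h: "\<omega> \<in> F" "\<omega>' \<in> F" "fst (snd \<omega>) = fst (snd \<omega>')"
    then have "\<omega> \<in> adversaries m U R H" "\<omega>' \<in> adversaries m U R H" "warped_tuple \<omega> = warped_tuple \<omega>'"
      unfolding F_def fibre_def by auto
    moreover have "\<forall>z\<in>dyadic_blocks m - top_block ` {1..<k}. snd (snd \<omega>) z = snd (snd \<omega>') z"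
      using same[OF h(1,2)] unfolding Z_def by blast
    ultimately show "\<omega> = \<omega>'" using h(3) by (intro adversary_determined) auto
  qed
  have "(\<lambda>\<omega>. fst (snd \<omega>)) ` F \<subseteq> {r. r < R \<and> (r * a!1) div m - (r * a!0) div m = W}"
  proof
    fix x assume "x \<in> (\<lambda>\<omega>. fst (snd \<omega>)) ` F"
    then obtain \<omega> where \<omega>: "\<omega> \<in> F" "x = fst (snd \<omega>)" by auto
    have "warped_gap \<omega> 0 = warped_gap \<omega>0 0"
      using \<omega> \<omega>0 k0 unfolding F_def fibre_def warped_tuple_def by auto
    moreover have "sum (snd (snd \<omega>)) (gap_blocks 0) = sum (snd (snd \<omega>0)) (gap_blocks 0)"
      using same[OF \<omega>(1) \<omega>0] first_blocks by (intro sum.cong) auto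
    ultimately have "dilation_ins x 0 = W"
      using warped_gap_eq[OF k0, of \<omega>] warped_gap_eq[OF k0, of \<omega>0] \<omega> unfolding W_def by simp
    moreover have "x < R" using adversariesD(2) \<omega> unfolding F_def fibre_def by auto
    ultimately show "x \<in> {r. r < R \<and> (r * a!1) div m - (r * a!0) div m = W}" unfolding dilation_ins_def by simp
  qed
  then have "card ((\<lambda>\<omega>. fst (snd \<omega>)) ` F) \<le> card {r. r < R \<and> (r * a!1) div m - (r * a!0) div m = W}"
    by (intro card_mono) simp_all
  then have "card F \<le> card {r. r < R \<and> (r * a!1) div m - (r * a!0) div m = W}"
    by (simp only: card_image[OF inj])
  then have "real (card F) \<le> real (card {r. r < R \<and> (r * a!1) div m - (r * a!0) div m = W})" by simp
  also have "\<dots> \<le> 2 * real m / real (a!1 - a!0) + 1"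
    using card_div_diff_eq_le[OF _ m0, of "a!0" "a!1" R W] query_less_Suc[OF k0] by simp
  finally show ?thesis unfolding F_def gap_def by simp
next
  case True
  show ?thesis unfolding True by simp
qed

text \<open>The dilation \<open>\<rho>\<close> is pinned down by the first warped gap up to \<open>2m/gap 0 + 1\<close> choices.\<close>

lemma card_fibre_le_by_dilation:
  "real (card (fibre p)) * U * R * (\<Prod>l\<in>{1..<k}. real (top_unit l) + 1)
     \<le> (2 * real m / real (gap 0) + 1) * card (adversaries m U R H)"
proof -
  define Z where "Z = top_block ` {1..<k}"
  define N where "N = 2 * real m / real (gap 0) + 1"
  define \<psi> where "\<psi> \<omega> = restrict (snd (snd \<omega>)) (dyadic_blocks m - Z)" for \<omega> :: adversary
  have N0: "0 \<le> N" unfolding N_def by simp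
  have "finite (fibre p)" unfolding fibre_def using finite_adversaries by simp
  then have "real (card (fibre p)) \<le> N * card (\<psi> ` fibre p)"
    using card_fibre_slice_le unfolding N_def \<psi>_def Z_def by (intro card_le_fibre_bound) auto
  also have "\<psi> ` fibre p \<subseteq> PiE (dyadic_blocks m - Z) (ins_range H)"
    using adversariesD(3) restrict_in_PiE_diff unfolding \<psi>_def fibre_def by fastforce
  then have "card (\<psi> ` fibre p) \<le> card (PiE (dyadic_blocks m - Z) (ins_range H))"
    by (intro card_mono) (simp_all add: finite_PiE finite_dyadic_blocks finite_ins_range)
  then have "N * card (\<psi> ` fibre p) \<le> N * card (PiE (dyadic_blocks m - Z) (ins_range H))"
    using N0 by (intro mult_left_mono) simp_all
  finally have "real (card (fibre p)) * (real U * real R * (\<Prod>l\<in>{1..<k}. real (top_unit l) + 1))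
      \<le> N * real (card (PiE (dyadic_blocks m - Z) (ins_range H))) * (real U * real R * (\<Prod>l\<in>{1..<k}. real (top_unit l) + 1))"
    by (intro mult_right_mono) (simp_all add: prod_nonneg)
  then have "real (card (fibre p)) * real U * real R * (\<Prod>l\<in>{1..<k}. real (top_unit l) + 1)
      \<le> N * (real U * real R * real (card (PiE (dyadic_blocks m - Z) (ins_range H))) * (\<Prod>l\<in>{1..<k}. real (top_unit l) + 1))"
    by (simp only: ac_simps)
  also have "\<dots> = N * card (adversaries m U R H)"
    using card_adversaries_split[of "{1..<k}"] unfolding Z_def by (simp add: subset_eq of_nat_prod add.commute)
  finally show ?thesis unfolding N_def .
qed

lemma warp_query_eq_sum_take:
  assumes "l \<le> k"
  shows "warp m \<omega> (a!0) + sum_list (take l (map (warped_gap \<omega>) [0..<k])) = warp m \<omega> (a!l)"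
  using assms
proof (induction l)
  case 0 then show ?case by simp
next
  case (Suc l)
  have lk: "l < k" using Suc.prems by simp
  have "take (Suc l) (map (warped_gap \<omega>) [0..<k]) = take l (map (warped_gap \<omega>) [0..<k]) @ [warped_gap \<omega> l]"
    using lk by (simp add: take_Suc_conv_app_nth)
  then have "sum_list (take (Suc l) (map (warped_gap \<omega>) [0..<k])) = sum_list (take l (map (warped_gap \<omega>) [0..<k])) + warped_gap \<omega> l"
    by simp
  moreover have "warp m \<omega> (a!l) \<le> warp m \<omega> (a!Suc l)" using warp_strict_mono[OF query_less_Suc[OF lk], of m \<omega>] by simp
  ultimately show ?case using Suc.IH lk unfolding warped_gap_def by simp
qed

lemma tuple_set_warped_tuple: "tuple_set (warped_tuple \<omega>) = warp m \<omega> ` set a"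
proof -
  have "tuple_set (warped_tuple \<omega>) = {warp m \<omega> (a!0) + sum_list (take l (map (warped_gap \<omega>) [0..<k])) | l. l \<le> k}"
    unfolding tuple_set_def warped_tuple_def by simp
  also have "\<dots> = {warp m \<omega> (a!l) | l. l \<le> k}"
    by (rule Collect_cong) (metis warp_query_eq_sum_take)
  also have "\<dots> = warp m \<omega> ` set a"
  proof -
    have "set a = {a!l | l. l \<le> k}" using len by (auto simp: set_conv_nth less_Suc_eq_le)
    then show ?thesis by auto
  qed
  finally show ?thesis .
qed

end

section \<open>Fibres against boxes\<close>

text \<open>The parameters of the proof: \<open>L0 = log m + 2\<close> bounds the number \<open>NS\<close> of dyadic scales,
  \<open>H \<approx> 8 L0 / \<delta>\<close> is the insertion rate, and \<open>U, R \<approx> \<delta> m / 8\<close> are the ranges of the shift and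
  of the dilation.\<close>

locale query_gaps_bounded = query_gaps +
  fixes \<delta> c L0 :: real and NS :: nat
  assumes dpos: "0 < \<delta>" and dlt: "\<delta> < 1" and c4: "4 \<le> c" and L01: "1 \<le> L0"
    and NSb: "\<And>s. 2 ^ s < m \<Longrightarrow> s < NS" and NSL: "real NS \<le> L0"
    and Hlo: "8 * L0 / \<delta> \<le> real H" and Hhi: "real H \<le> 9 * L0 / \<delta>"
    and Ulo: "\<delta> * m / 8 \<le> real U" and Upos: "1 \<le> U"
    and Rlo: "\<delta> * m / 8 \<le> real R" and Rpos: "1 \<le> R" and Rhi: "4 * R \<le> m"
begin

definition gap_lb :: "nat \<Rightarrow> nat" where
  "gap_lb l = gap l + base_ins l"

lemma log_bound_le_H: "L0 \<le> real H"
proof -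
  have "L0 \<le> 8 * L0 / \<delta>" using dpos dlt L01 by (simp add: field_simps)
  then show ?thesis using Hlo by linarith
qed

lemma base_ins_le:
  assumes lk: "l < k"
  shows "real (base_ins l) \<le> (L0 * gap l + 2 * 2 ^ fst (top_block l)) / real H"
proof -
  define S where "S = fst (top_block l)"
  define Bs where "Bs s = {b. a!l < b * 2^s \<and> b * 2^s \<le> a!Suc l}" for s
  have sub: "gap_blocks l \<subseteq> Sigma {..S} Bs"
  proof
    fix z assume z: "z \<in> gap_blocks l"
    then have "fst z \<le> S" using top_block(2)[OF lk] S_def by simp
    moreover have "snd z \<in> Bs (fst z)" using z unfolding gap_blocks_def blocks_between_def Bs_def dyadic_pos_def by auto
    ultimately show "z \<in> Sigma {..S} Bs" by (cases z) auto
  qed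
  have finBs: "finite (Bs s)" for s
  proof -
    have "Bs s \<subseteq> {..a!Suc l}" unfolding Bs_def
      by auto (metis le_trans mult_le_mono2 mult.right_neutral one_le_numeral one_le_power)
    then show ?thesis using finite_subset by blast
  qed
  have "real (base_ins l) = (\<Sum>z\<in>gap_blocks l. real (scale_unit H (fst z)))" unfolding base_ins_def by simp
  also have "\<dots> \<le> (\<Sum>s\<le>S. real (card (Bs s)) * 2 ^ s / real H)"
    using sub finBs by (intro sum_scale_unit_le_Sigma) auto
  also have "\<dots> = (\<Sum>s\<le>S. real (card (Bs s)) * (2 ^ s / real H))" by simp
  also have "\<dots> \<le> (\<Sum>s\<le>S. (real (gap l) / 2 ^ s + 1) * (2 ^ s / real H))"
  proof (rule sum_mono)
    fix s assume "s \<in> {..S}"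
    have "real (card (Bs s)) \<le> real (a!Suc l - a!l) / 2 ^ s + 1"
      unfolding Bs_def using card_multiples_between_le[of "2^s" "a!l" "a!Suc l"] query_less_Suc[OF lk] by simp
    then show "real (card (Bs s)) * (2 ^ s / real H) \<le> (real (gap l) / 2 ^ s + 1) * (2 ^ s / real H)"
      unfolding gap_def by (intro mult_right_mono) auto
  qed
  also have "\<dots> = (\<Sum>s\<le>S. (real (gap l) + 2 ^ s) / real H)"
  proof (rule sum.cong[OF refl])
    fix s
    have "(2::real)^s > 0" by simp
    moreover have "real H > 0" using Hpos by simp
    ultimately show "(real (gap l) / 2 ^ s + 1) * (2 ^ s / real H) = (real (gap l) + 2 ^ s) / real H"
      by (simp add: field_simps)
  qed
  also have "\<dots> = (real (Suc S) * gap l + (\<Sum>s\<le>S. 2 ^ s)) / real H"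
    by (simp add: sum_divide_distrib[symmetric] sum.distrib)
  also have "\<dots> \<le> (L0 * gap l + 2 * 2 ^ S) / real H"
  proof -
    have "2 ^ S \<le> dyadic_pos (top_block l)" unfolding dyadic_pos_def using top_block(1)[OF lk] S_def
      unfolding gap_blocks_def blocks_between_def dyadic_blocks_def by auto
    moreover have "dyadic_pos (top_block l) < m" using top_block(1)[OF lk] unfolding gap_blocks_def blocks_between_def dyadic_blocks_def by auto
    ultimately have "S < NS" using NSb by (meson le_less_trans)
    then have "real (Suc S) \<le> L0" using NSL by linarith
    then have "real (Suc S) * gap l \<le> L0 * gap l" by (simp add: mult_right_mono)
    moreover have "(\<Sum>s\<le>S. (2::real) ^ s) \<le> 2 * 2 ^ S" by (rule sum_power2_atMost_le)
    ultimately show ?thesis using Hpos by (simp add: divide_right_mono)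
  qed
  finally show ?thesis unfolding S_def .
qed

lemma gap_ins_bounds:
  assumes "\<omega> \<in> adversaries m U R H"
  shows "base_ins l \<le> sum (snd (snd \<omega>)) (gap_blocks l)" "sum (snd (snd \<omega>)) (gap_blocks l) \<le> 2 * base_ins l"
proof -
  have Y: "snd (snd \<omega>) \<in> PiE (dyadic_blocks m) (ins_range H)" using adversariesD(3)[OF assms] .
  have in_F: "z \<in> gap_blocks l \<Longrightarrow> snd (snd \<omega>) z \<in> ins_range H z" for z using Y gap_blocks_subset by (auto simp: PiE_iff)
  show "base_ins l \<le> sum (snd (snd \<omega>)) (gap_blocks l)" unfolding base_ins_def
    by (rule sum_mono) (use in_F in \<open>auto simp: ins_range_def\<close>)
  have "sum (snd (snd \<omega>)) (gap_blocks l) \<le> (\<Sum>z\<in>gap_blocks l. 2 * scale_unit H (fst z))"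
    by (rule sum_mono) (use in_F in \<open>auto simp: ins_range_def\<close>)
  then show "sum (snd (snd \<omega>)) (gap_blocks l) \<le> 2 * base_ins l" unfolding base_ins_def by (simp add: sum_distrib_left)
qed

lemma warped_gap_bounds:
  assumes w: "\<omega> \<in> adversaries m U R H" and lk: "l < k"
  shows "gap_lb l \<le> warped_gap \<omega> l" "real (warped_gap \<omega> l) \<le> 3 * real (gap_lb l)"
proof -
  define r where "r = fst (snd \<omega>)"
  have rR: "r < R" using adversariesD(2)[OF w] r_def by simp
  have df: "warped_gap \<omega> l = gap l + dilation_ins r l + sum (snd (snd \<omega>)) (gap_blocks l)" using warped_gap_eq[OF lk] r_def by simp
  show "gap_lb l \<le> warped_gap \<omega> l" unfolding gap_lb_def df using gap_ins_bounds(1)[OF w, of l] by simp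
  have m0: "0 < m" using Rhi Rpos by simp
  have "dilation_ins r l \<le> (r * gap l) div m + 1" unfolding dilation_ins_def gap_def
    using mult_div_diff_le[of "a!l" "a!Suc l" r m] query_less_Suc[OF lk] by simp
  moreover have "real ((r * gap l) div m) \<le> real (gap l) / 4"
  proof -
    have "real ((r * gap l) div m) \<le> real (r * gap l) / m" by (rule of_nat_div_le_of_nat)
    also have "\<dots> \<le> real (gap l) / 4"
    proof -
      have "real r * 4 \<le> real m" using rR Rhi by linarith
      then have "real r * real (gap l) * 4 \<le> real m * real (gap l)"
        by (metis mult.assoc mult.commute mult_right_mono of_nat_0_le_iff)
      then show ?thesis using m0 by (simp add: field_simps)
    qed
    finally show ?thesis .
  qed
  ultimately have fl_b: "real (dilation_ins r l) \<le> real (gap l) / 4 + 1" by linarith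
  have "real (warped_gap \<omega> l) = real (gap l) + real (dilation_ins r l) + real (sum (snd (snd \<omega>)) (gap_blocks l))" unfolding df by simp
  also have "\<dots> \<le> real (gap l) + (real (gap l) / 4 + 1) + 2 * real (base_ins l)"
    using fl_b gap_ins_bounds(2)[OF w, of l] by linarith
  also have "\<dots> \<le> 3 * real (gap_lb l)" unfolding gap_lb_def using gap_pos[OF lk] by simp
  finally show "real (warped_gap \<omega> l) \<le> 3 * real (gap_lb l)" .
qed

lemma gap_lb_le_top_unit:
  assumes lk: "l < k"
  shows "real (gap_lb l) \<le> 6 * real H * (real (top_unit l) + 1)"
    and "3 * real (gap l) < real (base_ins l) \<Longrightarrow> real (gap_lb l) < 4 * (real (top_unit l) + 1)"
proof -
  define S where "S = fst (top_block l)"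
  have H_pos: "0 < real H" using Hpos by simp
  have hb: "2 ^ S / real H < real (top_unit l) + 1" unfolding top_unit_def S_def by (rule scale_unit_gt)
  then have hb2: "2 ^ S < real H * (real (top_unit l) + 1)" using H_pos by (simp add: field_simps)
  have gb: "real (gap l) < 2 * 2 ^ S" using top_block(3)[OF lk] S_def by (metis of_nat_less_iff of_nat_mult of_nat_numeral of_nat_power)
  have Mb: "real (base_ins l) \<le> (L0 * gap l + 2 * 2 ^ S) / real H" using base_ins_le[OF lk] S_def by simp
  have "(L0 * gap l + 2 * 2 ^ S) / real H \<le> real (gap l) + 2 * (2 ^ S / real H)"
  proof -
    have "L0 * gap l \<le> real H * gap l" using log_bound_le_H by (simp add: mult_right_mono)
    then show ?thesis using H_pos by (simp add: field_simps)
  qed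
  then have Mb1: "real (base_ins l) \<le> real (gap l) + 2 * (2 ^ S / real H)" using Mb by (rule order_trans[rotated])
  have Mb2: "real (base_ins l) \<le> real (gap l) + 2 * (real (top_unit l) + 1)"
  proof -
    define X where "X = 2 ^ S / real H"
    have "2 * X \<le> 2 * (real (top_unit l) + 1)" using hb unfolding X_def by simp
    then show ?thesis using Mb1 unfolding X_def by simp
  qed
  have "real (gap_lb l) \<le> 2 * real (gap l) + 2 * (real (top_unit l) + 1)" unfolding gap_lb_def using Mb2 by simp
  also have "\<dots> \<le> 4 * (real H * (real (top_unit l) + 1)) + 2 * (real (top_unit l) + 1)" using gb hb2 by linarith
  also have "\<dots> \<le> 6 * real H * (real (top_unit l) + 1)"
  proof -
    have "1 \<le> real H" using Hpos by simp
    then have "(real (top_unit l) + 1) * 1 \<le> (real (top_unit l) + 1) * real H" by (intro mult_left_mono) simp_all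
    then show ?thesis by (simp add: algebra_simps)
  qed
  finally show "real (gap_lb l) \<le> 6 * real H * (real (top_unit l) + 1)" .
  assume "3 * real (gap l) < real (base_ins l)"
  then have "real (gap l) < real (top_unit l) + 1" using Mb2 by (smt (verit))
  then show "real (gap_lb l) < 4 * (real (top_unit l) + 1)" unfolding gap_lb_def using Mb2 by simp
qed

lemma scaled_gap_lb_le_top_unit:
  assumes "l < k"
  shows "3 * c * real (gap_lb l) \<le> (162 * c * L0 / \<delta>) * (real (top_unit l) + 1)"
proof -
  have c0: "0 \<le> c" using c4 by simp
  have "3 * c * real (gap_lb l) \<le> 3 * c * (6 * real H * (real (top_unit l) + 1))"
    using gap_lb_le_top_unit(1)[OF assms] c0 by (intro mult_left_mono) simp_all
  also have "\<dots> = (18 * c * real H) * (real (top_unit l) + 1)" by (simp add: algebra_simps)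
  also have "\<dots> \<le> (162 * c * L0 / \<delta>) * (real (top_unit l) + 1)"
  proof (rule mult_right_mono)
    have "18 * c * real H \<le> 18 * c * (9 * L0 / \<delta>)" using Hhi c0 by (intro mult_left_mono) simp_all
    then show "18 * c * real H \<le> 162 * c * L0 / \<delta>" by simp
  qed simp
  finally show ?thesis .
qed

lemma card_Pbox_le:
  assumes \<omega>: "\<omega> \<in> adversaries m U R H" and js: "length js = k" "warped_tuple \<omega> \<in> Pbox c m js"
  shows "real (card (Pbox c m js)) \<le> 2 * real m * (3 * c * real (gap_lb 0))
           * ((162 * c * L0 / \<delta>) ^ (k - 1) * (\<Prod>l\<in>{1..<k}. real (top_unit l) + 1))"
proof -
  have c1: "1 \<le> c" using c4 by simp
  have window: "real (card (scale_window c (js!l))) \<le> 3 * c * real (gap_lb l)" if "l < k" for l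
  proof -
    have "c ^ (js!l - 1) \<le> real (warped_gap \<omega> l)"
      using js that unfolding Pbox_def warped_tuple_def by auto
    then have "real (card (scale_window c (js!l))) \<le> c * real (warped_gap \<omega> l)"
      using card_scale_window_le[OF c1] power_le_mult_power_pred[OF c1] order_trans by blast
    also have "\<dots> \<le> c * (3 * real (gap_lb l))"
      using warped_gap_bounds(2)[OF \<omega> that] c1 by (intro mult_left_mono) simp_all
    finally show ?thesis by simp
  qed
  have "real (card (Pbox c m js)) = 2 * real m * (\<Prod>l<k. real (card (scale_window c (js!l))))"
    using card_Pbox[of c m js] js by (simp add: of_nat_prod)
  also have "\<dots> \<le> 2 * real m * (\<Prod>l<k. 3 * c * real (gap_lb l))"
    by (intro mult_left_mono prod_mono) (use window in auto)
  also have "(\<Prod>l<k. 3 * c * real (gap_lb l)) = 3 * c * real (gap_lb 0) * (\<Prod>l\<in>{1..<k}. 3 * c * real (gap_lb l))"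
    using kpos by (rule prod_lessThan_split_0)
  also have "(\<Prod>l\<in>{1..<k}. 3 * c * real (gap_lb l)) \<le> (\<Prod>l\<in>{1..<k}. (162 * c * L0 / \<delta>) * (real (top_unit l) + 1))"
  proof (rule prod_mono)
    fix l assume "l \<in> {1..<k}"
    then show "0 \<le> 3 * c * real (gap_lb l) \<and> 3 * c * real (gap_lb l) \<le> (162 * c * L0 / \<delta>) * (real (top_unit l) + 1)"
      using scaled_gap_lb_le_top_unit[of l] c1 by auto
  qed
  also have "\<dots> = (162 * c * L0 / \<delta>) ^ (k - 1) * (\<Prod>l\<in>{1..<k}. real (top_unit l) + 1)"
    by (simp only: prod.distrib prod_constant card_atLeastLessThan)
  finally show ?thesis using c1 by (simp add: mult_left_mono)
qed

lemma double_m_div_U_le: "2 * real m / real U \<le> 16 / \<delta>"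
  using Ulo Upos dpos by (simp add: field_simps)

lemma card_fibre_le_if_insertions_dominate:
  assumes "3 * real (gap 0) < real (base_ins 0)"
  shows "real (card (fibre p)) * (2 * real m * (3 * c * real (gap_lb 0))) * (\<Prod>l\<in>{1..<k}. real (top_unit l) + 1)
           \<le> 16 / \<delta> * (288 * c / \<delta>) * real (card (adversaries m U R H))"
proof -
  have c0: "0 \<le> c" using c4 by simp
  have "real (gap_lb 0) \<le> 4 * (real (top_unit 0) + 1)"
    using gap_lb_le_top_unit(2)[OF _ assms] kpos by simp
  then have "3 * c * real (gap_lb 0) \<le> 3 * c * (4 * (real (top_unit 0) + 1))"
    using c0 by (intro mult_left_mono) simp_all
  also have "\<dots> = 12 * c * (real (top_unit 0) + 1)" by simp
  also have "\<dots> \<le> 288 * c / \<delta> * (real (top_unit 0) + 1)"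
    using dpos dlt c0 mult_right_mono[of \<delta> 1 c] by (intro mult_right_mono) (simp_all add: field_simps)
  finally have first: "3 * c * real (gap_lb 0) \<le> 288 * c / \<delta> * (real (top_unit 0) + 1)" .
  define P where "P = (\<Prod>l\<in>{1..<k}. real (top_unit l) + 1)"
  define K where "K = 288 * c / \<delta>"
  have P0: "0 \<le> P" unfolding P_def by (intro prod_nonneg) simp
  have K0: "0 \<le> K" unfolding K_def using c0 dpos by simp
  have by_top: "real (card (fibre p)) * real U * ((real (top_unit 0) + 1) * P) \<le> real (card (adversaries m U R H))"
    using card_fibre_le_by_top_blocks[of p] prod_lessThan_split_0[OF kpos, of "\<lambda>l. real (top_unit l) + 1"]
    unfolding P_def by (simp add: of_nat_prod)
  have "real (card (fibre p)) * (2 * real m * (3 * c * real (gap_lb 0))) * P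
          \<le> real (card (fibre p)) * (2 * real m * (K * (real (top_unit 0) + 1))) * P"
    using first P0 unfolding K_def by (intro mult_right_mono mult_left_mono) simp_all
  also have "\<dots> = 2 * real m / real U * K * (real (card (fibre p)) * real U * ((real (top_unit 0) + 1) * P))"
    using Upos by (simp add: field_simps)
  also have "\<dots> \<le> 2 * real m / real U * K * real (card (adversaries m U R H))"
    using by_top K0 by (intro mult_left_mono) simp_all
  also have "\<dots> \<le> 16 / \<delta> * K * real (card (adversaries m U R H))"
    using double_m_div_U_le K0 by (intro mult_right_mono) simp_all
  finally show ?thesis unfolding P_def K_def .
qed

lemma card_fibre_le_if_gap_dominates:
  assumes "\<not> 3 * real (gap 0) < real (base_ins 0)"
  shows "real (card (fibre p)) * (2 * real m * (3 * c * real (gap_lb 0))) * (\<Prod>l\<in>{1..<k}. real (top_unit l) + 1)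
           \<le> 16 / \<delta> * (288 * c / \<delta>) * real (card (adversaries m U R H))"
proof -
  have c0: "0 \<le> c" using c4 by simp
  define P where "P = (\<Prod>l\<in>{1..<k}. real (top_unit l) + 1)"
  define N where "N = 2 * real m / real (gap 0) + 1"
  have P0: "0 \<le> P" unfolding P_def by (intro prod_nonneg) simp
  have g0: "0 < gap 0" using gap_pos kpos by simp
  have "gap 0 \<le> a!Suc 0" unfolding gap_def by simp
  then have gm: "real (gap 0) \<le> real m" using query_less_m[of 1] kpos by simp
  have first: "3 * c * real (gap_lb 0) \<le> 12 * c * real (gap 0)"
    using assms c0 unfolding gap_lb_def by (simp add: algebra_simps mult_left_mono)
  have by_dilation: "real (card (fibre p)) * real U * real R * P \<le> N * real (card (adversaries m U R H))"
    using card_fibre_le_by_dilation[of p] unfolding P_def N_def .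
  have "12 * c * real (gap 0) * N = 12 * c * (2 * real m + real (gap 0))"
    unfolding N_def using g0 by (simp add: field_simps)
  also have "\<dots> \<le> 12 * c * (3 * real m)" using gm c0 by (intro mult_left_mono) simp_all
  also have "\<dots> = 288 * c / \<delta> * (\<delta> * real m / 8)" using dpos by (simp add: field_simps)
  also have "\<dots> \<le> 288 * c / \<delta> * real R" using Rlo dpos c0 by (intro mult_left_mono) simp_all
  finally have dilation: "12 * c * real (gap 0) * N / real R \<le> 288 * c / \<delta>"
    using Rpos by (simp add: field_simps)
  have "real (card (fibre p)) * (2 * real m * (3 * c * real (gap_lb 0))) * P
          \<le> real (card (fibre p)) * (2 * real m * (12 * c * real (gap 0))) * P"
    using first P0 by (intro mult_right_mono mult_left_mono) simp_all
  also have "\<dots> = 2 * real m / real U * (12 * c * real (gap 0) / real R) * (real (card (fibre p)) * real U * real R * P)"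
    using Upos Rpos by (simp add: field_simps)
  also have "\<dots> \<le> 2 * real m / real U * (12 * c * real (gap 0) / real R) * (N * real (card (adversaries m U R H)))"
    using by_dilation c0 by (intro mult_left_mono) simp_all
  also have "\<dots> = 2 * real m / real U * (12 * c * real (gap 0) * N / real R) * real (card (adversaries m U R H))"
    by (simp add: field_simps)
  also have "\<dots> \<le> 16 / \<delta> * (288 * c / \<delta>) * real (card (adversaries m U R H))"
    using double_m_div_U_le dilation dpos c0 g0 Upos
    by (intro mult_right_mono mult_mono) (simp_all add: N_def)
  finally show ?thesis unfolding P_def .
qed

text \<open>The first warped gap is dominated either by its insertions or by its length; the randomness
  of the top block or of \<open>\<rho>\<close>, respectively, pays for the first factor of the box.\<close>

lemma card_fibre_mult_card_Pbox_le:
  assumes js: "length js = k" "p \<in> Pbox c m js"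
  shows "real (card (fibre p)) * real (card (Pbox c m js))
         \<le> (16 / \<delta>) * (288 * c / \<delta>) * (162 * c * L0 / \<delta>) ^ (k - 1) * real (card (adversaries m U R H))"
proof (cases "fibre p = {}")
  case True
  then show ?thesis using dpos c4 L01 by simp
next
  case False
  then obtain \<omega> where \<omega>: "\<omega> \<in> adversaries m U R H" "warped_tuple \<omega> = p" unfolding fibre_def by auto
  define P where "P = (\<Prod>l\<in>{1..<k}. real (top_unit l) + 1)"
  define X where "X = 2 * real m * (3 * c * real (gap_lb 0))"
  define T where "T = (162 * c * L0 / \<delta>) ^ (k - 1)"
  have T0: "0 \<le> T" unfolding T_def using dpos c4 L01 by simp
  have fib: "real (card (fibre p)) * X * P \<le> 16 / \<delta> * (288 * c / \<delta>) * real (card (adversaries m U R H))"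
    unfolding X_def P_def using card_fibre_le_if_insertions_dominate card_fibre_le_if_gap_dominates by blast
  have "real (card (Pbox c m js)) \<le> X * (T * P)"
    using card_Pbox_le[OF \<omega>(1) js(1)] \<omega>(2) js(2) unfolding X_def T_def P_def by (simp add: mult.assoc)
  then have "real (card (fibre p)) * real (card (Pbox c m js)) \<le> real (card (fibre p)) * (X * (T * P))"
    by (intro mult_left_mono) simp_all
  also have "\<dots> = T * (real (card (fibre p)) * X * P)" by (simp add: algebra_simps)
  also have "\<dots> \<le> T * (16 / \<delta> * (288 * c / \<delta>) * real (card (adversaries m U R H)))"
    using fib T0 by (rule mult_left_mono)
  finally show ?thesis unfolding T_def by (simp add: algebra_simps)
qed

text \<open>The scales whose window can contain the \<open>l\<close>-th warped gap (see \<open>warped_gap_bounds\<close>).\<close>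

definition scale_choices :: "nat \<Rightarrow> nat \<Rightarrow> nat set" where
  "scale_choices t l = {j. 1 \<le> j \<and> j \<le> t \<and>
     (\<exists>v::nat. gap_lb l \<le> v \<and> real v \<le> 3 * real (gap_lb l) \<and> c ^ (j - 1) \<le> real v \<and> real v < c ^ j)}"

definition scale_vectors :: "nat \<Rightarrow> nat list set" where
  "scale_vectors t = {js. length js = k \<and> (\<forall>l<k. js!l \<in> scale_choices t l)}"

lemma gap_lb_pos: "l < k \<Longrightarrow> 1 \<le> gap_lb l"
  unfolding gap_lb_def using gap_pos by (simp add: Suc_leI trans_le_add1)

lemma scale_choice_close:
  assumes lk: "l < k" and j0: "j0 \<in> scale_choices t l" and j: "j \<in> scale_choices t l"
  shows "j \<le> j0 + 1"
proof (rule ccontr)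
  assume "\<not> j \<le> j0 + 1"
  then have jj: "j0 + 1 \<le> j - 1" by simp
  obtain v0 where v0: "gap_lb l \<le> v0" "real v0 < c ^ j0" using j0 unfolding scale_choices_def by auto
  obtain v where v: "c ^ (j - 1) \<le> real v" "real v \<le> 3 * real (gap_lb l)" using j unfolding scale_choices_def by auto
  have c1: "1 \<le> c" using c4 by simp
  have "c ^ (j0 + 1) \<le> c ^ (j - 1)" by (rule power_increasing[OF jj c1])
  then have "c * c ^ j0 \<le> real v" using v by simp
  moreover have "c * real v0 < c * c ^ j0" using v0 c4 by simp
  moreover have "4 * real (gap_lb l) \<le> c * real v0"
  proof -
    have "4 * real (gap_lb l) \<le> c * real (gap_lb l)" using c4 by (intro mult_right_mono) simp_all
    also have "\<dots> \<le> c * real v0" using v0 c4 by (intro mult_left_mono) simp_all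
    finally show ?thesis .
  qed
  moreover have "0 < real (gap_lb l)" using gap_lb_pos[OF lk] by simp
  ultimately show False using v by linarith
qed

lemma card_scale_choices: "l < k \<Longrightarrow> card (scale_choices t l) \<le> 2"
proof -
  assume lk: "l < k"
  have fin: "finite (scale_choices t l)" unfolding scale_choices_def by (rule finite_subset[of _ "{..t}"]) auto
  show ?thesis
  proof (cases "scale_choices t l = {}")
    case True then show ?thesis by simp
  next
    case False
    define j0 where "j0 = Min (scale_choices t l)"
    have j0in: "j0 \<in> scale_choices t l" unfolding j0_def using Min_in[OF fin False] .
    have "scale_choices t l \<subseteq> {j0, j0 + 1}"
    proof
      fix j assume j: "j \<in> scale_choices t l"
      have "j0 \<le> j" unfolding j0_def using Min_le[OF fin j] .
      moreover have "j \<le> j0 + 1" using scale_choice_close[OF lk j0in j] .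
      ultimately show "j \<in> {j0, j0 + 1}" by auto
    qed
    then have "card (scale_choices t l) \<le> card {j0, j0 + 1}" by (rule card_mono[rotated]) simp
    also have "\<dots> \<le> 2" by (simp add: card_insert_le_m1)
    finally show ?thesis .
  qed
qed

lemma scale_vectors_finite_card: "finite (scale_vectors t) \<and> card (scale_vectors t) \<le> 2 ^ k"
proof -
  have fin: "\<And>l. l < k \<Longrightarrow> finite (scale_choices t l)" unfolding scale_choices_def by (rule finite_subset[of _ "{..t}"]) auto
  have c: "finite (scale_vectors t) \<and> card (scale_vectors t) = (\<Prod>l<k. card (scale_choices t l))"
    unfolding scale_vectors_def by (rule card_lists_nth_in[OF fin])
  have "(\<Prod>l<k. card (scale_choices t l)) \<le> (\<Prod>l<k. 2)" by (rule prod_mono) (use card_scale_choices in auto)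
  then show ?thesis using c by simp
qed

lemma warped_tuple_in_Pbox:
  assumes w: "\<omega> \<in> adversaries m U R H" and bound: "\<And>p. p < m \<Longrightarrow> warp m \<omega> p < 2 * m"
    and ct: "2 * real m \<le> c ^ t"
  shows "\<exists>js\<in>scale_vectors t. warped_tuple \<omega> \<in> Pbox c m js"
proof -
  define jf where "jf l = (LEAST j. real (warped_gap \<omega> l) < c ^ j)" for l
  define js where "js = map jf [0..<k]"
  have dlt: "real (warped_gap \<omega> l) < c ^ t" if lk: "l < k" for l
  proof -
    have "warped_gap \<omega> l \<le> warp m \<omega> (a!Suc l)" unfolding warped_gap_def by simp
    moreover have "warp m \<omega> (a!Suc l) < 2 * m" using bound query_less_m lk by simp
    ultimately show ?thesis using ct by linarith
  qed
  have jprops: "1 \<le> jf l \<and> jf l \<le> t \<and> c ^ (jf l - 1) \<le> real (warped_gap \<omega> l) \<and> real (warped_gap \<omega> l) < c ^ jf l"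
    if lk: "l < k" for l
  proof -
    have ex: "\<exists>j. real (warped_gap \<omega> l) < c ^ j" using dlt[OF lk] by blast
    have lt: "real (warped_gap \<omega> l) < c ^ jf l" unfolding jf_def by (rule LeastI_ex[OF ex])
    have le_t: "jf l \<le> t" unfolding jf_def by (rule Least_le) (rule dlt[OF lk])
    have d1: "1 \<le> warped_gap \<omega> l" using warped_gap_bounds(1)[OF w lk] gap_lb_pos[OF lk] by simp
    have j1: "1 \<le> jf l"
    proof (rule ccontr)
      assume "\<not> 1 \<le> jf l"
      then have "jf l = 0" by simp
      then show False using lt d1 by simp
    qed
    have "\<not> real (warped_gap \<omega> l) < c ^ (jf l - 1)"
      unfolding jf_def by (rule not_less_Least) (use j1 in \<open>simp add: jf_def\<close>)
    then show ?thesis using lt le_t j1 by simp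
  qed
  have "js \<in> scale_vectors t"
    unfolding scale_vectors_def scale_choices_def js_def using jprops warped_gap_bounds[OF w] by fastforce
  moreover have "warped_tuple \<omega> \<in> Pbox c m js"
    unfolding Pbox_def warped_tuple_def js_def using jprops bound[of "a!0"] query_less_m[of 0] by auto
  ultimately show ?thesis by blast
qed

lemma sum_card_fibres_le:
  assumes "length js = k" "0 \<le> \<theta>"
    and G: "real (card {p \<in> Pbox c m js. p \<in> G}) \<le> \<theta> * real (card (Pbox c m js))"
  shows "(\<Sum>p\<in>{p \<in> Pbox c m js. p \<in> G}. real (card (fibre p)))
           \<le> \<theta> * ((16 / \<delta>) * (288 * c / \<delta>) * (162 * c * L0 / \<delta>) ^ (k - 1)) * real (card (adversaries m U R H))"
proof (cases "{p \<in> Pbox c m js. p \<in> G} = {}")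
  case False
  define K where "K = (16 / \<delta>) * (288 * c / \<delta>) * (162 * c * L0 / \<delta>) ^ (k - 1) * real (card (adversaries m U R H))"
  define B where "B = real (card (Pbox c m js))"
  have "0 < card (Pbox c m js)" using False card_Pbox[of c m js] card_gt_0_iff by blast
  then have B0: "0 < B" unfolding B_def by simp
  have "(\<Sum>p\<in>{p \<in> Pbox c m js. p \<in> G}. real (card (fibre p))) \<le> (\<Sum>p\<in>{p \<in> Pbox c m js. p \<in> G}. K / B)"
  proof (rule sum_mono)
    fix p assume "p \<in> {p \<in> Pbox c m js. p \<in> G}"
    then have "real (card (fibre p)) * B \<le> K"
      using card_fibre_mult_card_Pbox_le[OF assms(1), of p] unfolding K_def B_def by simp
    then show "real (card (fibre p)) \<le> K / B" using B0 by (simp add: field_simps)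
  qed
  also have "\<dots> = real (card {p \<in> Pbox c m js. p \<in> G}) * K / B" by simp
  also have "\<dots> \<le> \<theta> * B * K / B"
    using G B0 dpos c4 L01 unfolding K_def B_def by (intro divide_right_mono mult_right_mono) simp_all
  finally show ?thesis using B0 unfolding K_def by (simp add: algebra_simps)
next
  case True
  show ?thesis unfolding True using assms(2) dpos c4 L01 by simp
qed

text \<open>The scales of every warped tuple are among at most \<open>2^k\<close> candidates, so summing the previous
  bound over the boxes costs a factor \<open>2^k\<close>.\<close>

lemma card_good_adversaries_le:
  fixes G :: "(nat \<times> nat list) set" and \<theta> :: real
  assumes bound: "\<And>\<omega> p. \<omega> \<in> adversaries m U R H \<Longrightarrow> p < m \<Longrightarrow> warp m \<omega> p < 2 * m"
    and ct: "2 * real m \<le> c ^ t" and th: "0 \<le> \<theta>"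
    and hyp: "\<And>js. js \<in> scale_vectors t \<Longrightarrow> real (card {p\<in>Pbox c m js. p \<in> G}) \<le> \<theta> * real (card (Pbox c m js))"
  shows "real (card {\<omega>\<in>adversaries m U R H. warped_tuple \<omega> \<in> G})
          \<le> 2 ^ k * \<theta> * ((16 / \<delta>) * (288 * c / \<delta>) * (162 * c * L0 / \<delta>) ^ (k - 1)) * real (card (adversaries m U R H))"
proof -
  define K where "K = \<theta> * ((16 / \<delta>) * (288 * c / \<delta>) * (162 * c * L0 / \<delta>) ^ (k - 1)) * real (card (adversaries m U R H))"
  define PG where "PG js = {p\<in>Pbox c m js. p \<in> G}" for js
  have fin: "finite (scale_vectors t)" and card: "card (scale_vectors t) \<le> 2 ^ k"
    using scale_vectors_finite_card by auto
  have finPG: "finite (PG js)" for js unfolding PG_def using card_Pbox[of c m js] by simp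
  have finF: "finite (fibre p)" for p unfolding fibre_def using finite_adversaries by simp
  have "{\<omega>\<in>adversaries m U R H. warped_tuple \<omega> \<in> G} \<subseteq> (\<Union>js\<in>scale_vectors t. \<Union>p\<in>PG js. fibre p)"
  proof
    fix \<omega> assume \<omega>: "\<omega> \<in> {\<omega>\<in>adversaries m U R H. warped_tuple \<omega> \<in> G}"
    then obtain js where "js \<in> scale_vectors t" "warped_tuple \<omega> \<in> Pbox c m js"
      using warped_tuple_in_Pbox[OF _ bound ct] by blast
    then show "\<omega> \<in> (\<Union>js\<in>scale_vectors t. \<Union>p\<in>PG js. fibre p)" using \<omega> unfolding PG_def fibre_def by auto
  qed
  then have "card {\<omega>\<in>adversaries m U R H. warped_tuple \<omega> \<in> G} \<le> card (\<Union>js\<in>scale_vectors t. \<Union>p\<in>PG js. fibre p)"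
    using fin finPG finF by (intro card_mono) auto
  also have "\<dots> \<le> (\<Sum>js\<in>scale_vectors t. card (\<Union>p\<in>PG js. fibre p))" by (rule card_UN_le[OF fin])
  also have "\<dots> \<le> (\<Sum>js\<in>scale_vectors t. \<Sum>p\<in>PG js. card (fibre p))"
    by (intro sum_mono card_UN_le finPG)
  finally have "real (card {\<omega>\<in>adversaries m U R H. warped_tuple \<omega> \<in> G})
      \<le> real (\<Sum>js\<in>scale_vectors t. \<Sum>p\<in>PG js. card (fibre p))"
    by (simp only: of_nat_le_iff)
  also have "\<dots> = (\<Sum>js\<in>scale_vectors t. \<Sum>p\<in>PG js. real (card (fibre p)))" by simp
  also have "\<dots> \<le> (\<Sum>js\<in>scale_vectors t. K)"
    using sum_card_fibres_le th hyp unfolding PG_def K_def scale_vectors_def by (intro sum_mono) auto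
  also have "\<dots> = real (card (scale_vectors t)) * K" by simp
  also have "\<dots> \<le> 2 ^ k * K"
  proof (rule mult_right_mono)
    show "real (card (scale_vectors t)) \<le> 2 ^ k"
      using card by (simp only: of_nat_le_numeral_power_cancel_iff)
    show "0 \<le> K" using th dpos c4 L01 unfolding K_def by simp
  qed
  finally show ?thesis unfolding K_def by (simp add: ac_simps)
qed

end

text \<open>Union bound over the \<open>2^(q-1)\<close> scale vectors, times the density \<open>\<gamma> / L^(q-2)\<close> of good
  tuples in a box, times the fibre constant: this is what dictates the value of \<open>\<gamma>\<close>.\<close>

lemma union_bound_constant_le_Suc_Suc:
  fixes j :: nat and c \<delta> \<epsilon> L :: real
  assumes c4: "4 \<le> c" and d0: "0 < \<delta>" and e0: "0 < \<epsilon>" and L0: "0 < L"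
  shows "2 ^ (j + 1) * ((\<epsilon> / (256 * c^2 / \<delta>) ^ (j + 2)) / L ^ j)
         * ((16 / \<delta>) * (288 * c / \<delta>) * (162 * c * L / \<delta>) ^ j) \<le> \<epsilon> / 4"
proof -
  have c0: "0 < c" using c4 by simp
  define X where "X = 256 * c^2 / \<delta>"
  define Y where "Y = 162 * c * L / \<delta>"
  have X0: "0 < X" unfolding X_def using c0 d0 by simp
  have e1: "X ^ (j + 2) = X^2 * X ^ j" by (rule trans[OF power_add mult.commute])
  have e2: "(2::real) ^ (j + 1) = 2 * 2 ^ j" by simp
  have "2 ^ (j + 1) * ((\<epsilon> / X ^ (j + 2)) / L ^ j) * ((16 / \<delta>) * (288 * c / \<delta>) * Y ^ j)
      = (\<epsilon> * (2 * 16 * 288 * c / (\<delta> * \<delta> * X^2))) * ((2 ^ j * Y ^ j) / (L ^ j * X ^ j))"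
    unfolding e1 e2 using X0 L0 d0 by (simp add: field_simps)
  also have "(2 ^ j * Y ^ j) / (L ^ j * X ^ j) = (2 * Y / (L * X)) ^ j"
    by (simp add: power_divide power_mult_distrib)
  also have "2 * Y / (L * X) = 324 / (256 * c)"
    unfolding X_def Y_def using c0 d0 L0 by (simp add: field_simps power2_eq_square)
  also have "2 * 16 * 288 * c / (\<delta> * \<delta> * X^2) = 9216 / (65536 * c^3)"
    unfolding X_def using c0 d0 by (simp add: field_simps power2_eq_square power3_eq_cube)
  finally have eq: "2 ^ (j + 1) * ((\<epsilon> / X ^ (j + 2)) / L ^ j) * ((16 / \<delta>) * (288 * c / \<delta>) * Y ^ j)
      = \<epsilon> * (9216 / (65536 * c^3)) * (324 / (256 * c)) ^ j" .
  have b1: "9216 / (65536 * c^3) \<le> 1 / 4"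
  proof -
    have "4^3 \<le> c^3" using c4 by (intro power_mono) simp_all
    then have "64 \<le> c^3" by simp
    then show ?thesis using c0 by (simp add: field_simps)
  qed
  have b2: "(324 / (256 * c)) ^ j \<le> 1"
  proof -
    have "324 / (256 * c) \<le> 1" using c4 by (simp add: field_simps)
    moreover have "0 \<le> 324 / (256 * c)" using c0 by simp
    ultimately show ?thesis by (simp add: power_le_one)
  qed
  have "\<epsilon> * (9216 / (65536 * c^3)) * (324 / (256 * c)) ^ j \<le> \<epsilon> * (1/4) * 1"
    using b1 b2 e0 c0 by (intro mult_mono) simp_all
  then show ?thesis using eq unfolding X_def Y_def by simp
qed

lemma union_bound_constant_le:
  fixes q :: nat and c \<delta> \<epsilon> L :: real
  assumes q2: "2 \<le> q" and c4: "4 \<le> c" and d0: "0 < \<delta>" and e0: "0 < \<epsilon>" and L0: "0 < L"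
  shows "2 ^ (q - 1) * ((\<epsilon> / (256 * c^2 / \<delta>) ^ q) / L ^ (q - 2))
         * ((16 / \<delta>) * (288 * c / \<delta>) * (162 * c * L / \<delta>) ^ (q - 2)) \<le> \<epsilon> / 4"
proof -
  define j where "j = q - 2"
  have e1: "q - 1 = j + 1" and e2: "q = j + 2" using q2 unfolding j_def by simp_all
  show ?thesis unfolding e1 j_def[symmetric] using union_bound_constant_le_Suc_Suc[OF c4 d0 e0 L0, of j]
    by (simp only: e2)
qed

section \<open>The contradiction\<close>

lemma reads_factor_through_restrict_word:
  fixes \<pi> :: "nat \<Rightarrow> nat"
  assumes "set Q \<subseteq> S" "finite S" "\<And>x y. x < y \<Longrightarrow> \<pi> x < \<pi> y"
  shows "\<exists>g. \<forall>w. map (\<lambda>p. w ! \<pi> p) Q = g (restrict_word w (\<pi> ` S))"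
proof -
  define a where "a = sorted_list_of_set S"
  define idx where "idx p = (LEAST j. j < length a \<and> a ! j = p)" for p
  have idx: "idx p < length a \<and> a ! idx p = p" if "p \<in> S" for p
  proof -
    have "\<exists>j. j < length a \<and> a ! j = p"
      using that assms(2) by (metis a_def in_set_conv_nth set_sorted_list_of_set)
    then show ?thesis unfolding idx_def by (rule LeastI_ex)
  qed
  have "restrict_word w (\<pi> ` S) = map (\<lambda>p. w ! \<pi> p) a" for w
    using sorted_list_of_set_image_strict_mono[OF assms(2,3)] unfolding restrict_word_def a_def by simp
  then have "map (\<lambda>p. w ! \<pi> p) Q = map (\<lambda>p. restrict_word w (\<pi> ` S) ! idx p) Q" for w
    using idx assms(1) by auto
  then show ?thesis by (intro exI[of _ "\<lambda>v. map (\<lambda>p. v ! idx p) Q"]) simp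
qed

lemma nonadaptive_insdel_LDCE:
  assumes "nonadaptive_insdel_LDC q \<delta> \<epsilon> n m C"
  obtains Dec :: decoder
  where "\<And>x. x \<in> strings n \<Longrightarrow> length (C x) = m"
    and "\<And>m' i Q f. (Q, f) \<in> set_pmf (Dec m' i) \<Longrightarrow> length Q \<le> q \<and> (\<forall>p\<in>set Q. p < m')"
    and "\<And>x y i. x \<in> strings n \<Longrightarrow> i < n \<Longrightarrow> real (ED (C x) y) \<le> 2 * \<delta> * real m \<Longrightarrow>
           dec_output_prob Dec y i (x ! i) \<ge> 1/2 + \<epsilon>"
proof -
  obtain Dec :: decoder
    where "\<forall>m' i Q f. (Q, f) \<in> set_pmf (Dec m' i) \<longrightarrow> length Q \<le> q \<and> (\<forall>p\<in>set Q. p < m')"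
      and "\<forall>x\<in>strings n. \<forall>y. \<forall>i<n. real (ED (C x) y) \<le> 2 * \<delta> * real m \<longrightarrow>
             dec_output_prob Dec y i (x ! i) \<ge> 1/2 + \<epsilon>"
    using assms unfolding nonadaptive_insdel_LDC_def by (elim conjE exE)
  moreover have "\<forall>x\<in>strings n. length (C x) = m"
    using assms unfolding nonadaptive_insdel_LDC_def by (elim conjE)
  ultimately show thesis by - (rule that[of Dec], auto)
qed

locale adversary_setup =
  fixes q n m U R H NS t :: nat and \<delta> \<epsilon> c L0 :: real and C :: "bool list \<Rightarrow> bool list"
  assumes q3: "3 \<le> q" and dpos: "0 < \<delta>" and dlt: "\<delta> < 1" and e0: "0 < \<epsilon>"
    and c4: "4 \<le> c" and L01: "1 \<le> L0"
    and NSb: "\<And>s. 2 ^ s < m \<Longrightarrow> s < NS" and NSL: "real NS \<le> L0"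
    and Hlo: "8 * L0 / \<delta> \<le> real H" and Hhi: "real H \<le> 9 * L0 / \<delta>"
    and Ulo: "\<delta> * m / 8 \<le> real U" and Upos: "1 \<le> U" and Uhi: "real U \<le> \<delta> * m / 4"
    and Rlo: "\<delta> * m / 8 \<le> real R" and Rpos: "1 \<le> R" and R_le_delta_m: "real R \<le> \<delta> * m / 4"
    and ct: "2 * real m \<le> c ^ t" and mq: "q \<le> m"
begin

lemma H_pos: "0 < H"
proof -
  have "0 < 8 * L0 / \<delta>" using L01 dpos by simp
  then show ?thesis using Hlo by simp
qed

lemma inserted_le_delta_m:
  assumes w: "\<omega> \<in> adversaries m U R H" and pm: "p \<le> m"
  shows "real (inserted m \<omega> p) \<le> 3 * \<delta> * m / 4"
proof -
  have b: "real (inserted m \<omega> p) \<le> real U + real R + 2 * real NS * real m / real H"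
    by (rule inserted_le[OF w pm NSb])
  have "2 * real NS * real m / real H \<le> \<delta> * m / 4"
  proof -
    have Hp: "0 < real H" using H_pos by simp
    have "2 * real NS * real m \<le> 2 * L0 * real m" using NSL by (simp add: mult_right_mono)
    also have "\<dots> = (8 * L0 / \<delta>) * (\<delta> * m / 4)" using dpos by (simp add: field_simps)
    also have "\<dots> \<le> real H * (\<delta> * m / 4)" using Hlo dpos by (intro mult_right_mono) simp_all
    finally show ?thesis using Hp by (simp add: field_simps)
  qed
  then show ?thesis using b Uhi R_le_delta_m by linarith
qed

lemma R_le: "4 * R \<le> m"
proof -
  have "real (4 * R) \<le> \<delta> * m" using R_le_delta_m by simp
  also have "\<dots> \<le> real m" using dlt mult_right_mono[of \<delta> 1 "real m"] by simp
  finally show ?thesis by simp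
qed

lemma warp_less_2m: "\<omega> \<in> adversaries m U R H \<Longrightarrow> p < m \<Longrightarrow> warp m \<omega> p < 2 * m"
proof -
  assume w: "\<omega> \<in> adversaries m U R H" and pm: "p < m"
  have "real (inserted m \<omega> p) \<le> 3 * \<delta> * m / 4" using inserted_le_delta_m[OF w] pm by simp
  also have "\<dots> < real m"
  proof -
    have "0 < real m" using pm by simp
    then have "\<delta> * real m < 1 * real m" using dlt by (intro mult_strict_right_mono) simp_all
    then show ?thesis by simp
  qed
  finally have "inserted m \<omega> p < m" by simp
  then show ?thesis unfolding warp_def using pm by simp
qed

definition max_ins :: nat where
  "max_ins = nat \<lfloor>\<delta> * m\<rfloor>"

lemma warp_le_max_ins: "\<omega> \<in> adversaries m U R H \<Longrightarrow> p < m \<Longrightarrow> warp m \<omega> p \<le> p + max_ins"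
proof -
  assume w: "\<omega> \<in> adversaries m U R H" and pm: "p < m"
  have "real (inserted m \<omega> p) \<le> 3 * \<delta> * m / 4" using inserted_le_delta_m[OF w] pm by simp
  also have "\<dots> \<le> \<delta> * m" using dpos by simp
  finally have "real (inserted m \<omega> p) \<le> \<delta> * m" .
  then have "inserted m \<omega> p \<le> max_ins" unfolding max_ins_def by linarith
  then show ?thesis unfolding warp_def by simp
qed

lemma max_ins_le_delta_m: "real max_ins \<le> \<delta> * m"
  using dpos unfolding max_ins_def by simp

definition corrupt :: "adversary \<Rightarrow> bool list \<Rightarrow> bool list" where
  "corrupt \<omega> w = map (\<lambda>p. w ! warp m \<omega> p) [0..<m]"

lemma ED_corrupt_le:
  assumes w: "\<omega> \<in> adversaries m U R H" and len: "length cx = m"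
  shows "real (ED cx (corrupt \<omega> (cx @ r))) \<le> 2 * \<delta> * m"
proof -
  have "ED cx (corrupt \<omega> (cx @ r)) \<le> 2 * max_ins"
    unfolding corrupt_def using len warp_strict_mono warp_le_max_ins[OF w]
    by (rule ED_read_strict_mono_le)
  then have "real (ED cx (corrupt \<omega> (cx @ r))) \<le> 2 * real max_ins" by simp
  then show ?thesis using max_ins_le_delta_m by linarith
qed

definition few_good :: "nat \<Rightarrow> bool" where
  "few_good i \<longleftrightarrow> (\<forall>js. length js = q - 1 \<longrightarrow> set js \<subseteq> {1..t} \<longrightarrow>
     real (card {p \<in> Pbox c m js. tuple_set p \<in> Good q \<epsilon> n m C i})
       < \<epsilon> / (256 * c^2 / \<delta>) ^ q * real (card (Pbox c m js)) / L0 ^ (q - 2))"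

lemma card_good_warps_le:
  assumes few: "few_good i" and S: "S \<subseteq> {..<m}" "card S = q"
  shows "real (card {\<omega> \<in> adversaries m U R H. warp m \<omega> ` S \<in> Good q \<epsilon> n m C i})
           \<le> \<epsilon> / 4 * real (card (adversaries m U R H))"
proof -
  define a where "a = sorted_list_of_set S"
  have fin: "finite S" using S(1) finite_subset by blast
  interpret G: query_gaps_bounded m U R H a "q - 1" \<delta> c L0 NS
  proof unfold_locales
    show "length a = Suc (q - 1)" using S q3 fin by (simp add: a_def)
    show "\<forall>x\<in>set a. x < m" using S fin by (auto simp: a_def)
  qed (use q3 H_pos R_le dpos dlt c4 L01 NSb NSL Hlo Hhi Ulo Upos Rlo Rpos in \<open>auto simp: a_def\<close>)
  define \<theta> where "\<theta> = \<epsilon> / (256 * c^2 / \<delta>) ^ q / L0 ^ (q - 2)"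
  have "real (card {p \<in> Pbox c m js. p \<in> {p. tuple_set p \<in> Good q \<epsilon> n m C i}})
          \<le> \<theta> * real (card (Pbox c m js))" if "js \<in> G.scale_vectors t" for js
  proof -
    have "length js = q - 1" "set js \<subseteq> {1..t}"
      using that unfolding G.scale_vectors_def G.scale_choices_def by (auto simp: in_set_conv_nth)
    then show ?thesis using few unfolding few_good_def \<theta>_def by fastforce
  qed
  then have "real (card {\<omega> \<in> adversaries m U R H. G.warped_tuple \<omega> \<in> {p. tuple_set p \<in> Good q \<epsilon> n m C i}})
      \<le> 2 ^ (q - 1) * \<theta> * ((16 / \<delta>) * (288 * c / \<delta>) * (162 * c * L0 / \<delta>) ^ (q - 1 - 1))
          * real (card (adversaries m U R H))"
    using e0 dpos c4 L01 ct by (intro G.card_good_adversaries_le warp_less_2m) (auto simp: \<theta>_def)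
  also have "\<dots> \<le> \<epsilon> / 4 * real (card (adversaries m U R H))"
    using union_bound_constant_le[OF _ c4 dpos e0, of q L0] q3 L01
    by (intro mult_right_mono) (simp_all add: \<theta>_def mult.assoc numeral_2_eq_2)
  finally show ?thesis unfolding mem_Collect_eq G.tuple_set_warped_tuple using fin by (simp add: a_def)
qed

lemma card_correct_given_adversary_le:
  assumes w: "\<omega> \<in> adversaries m U R H" and S: "set Q \<subseteq> S" "S \<subseteq> {..<m}" "card S = q"
  shows "real (card {(x, r). x \<in> strings n \<and> r \<in> strings m \<and> f (map ((!) (corrupt \<omega> (C x @ r))) Q) = x ! i})
           \<le> (1/2 + \<epsilon>/4) * 2 ^ (n + m) + (if warp m \<omega> ` S \<in> Good q \<epsilon> n m C i then 2 ^ (n + m) else 0)"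
    (is "real (card ?Corr) \<le> _")
proof -
  have fin: "finite S" using S(2) finite_subset by blast
  from reads_factor_through_restrict_word[OF S(1) fin warp_strict_mono[where m=m and \<omega>=\<omega>]]
  obtain g where g: "\<forall>w. map (\<lambda>p. w ! warp m \<omega> p) Q = g (restrict_word w (warp m \<omega> ` S))" ..
  have "map ((!) (corrupt \<omega> w)) Q = map (\<lambda>p. w ! warp m \<omega> p) Q" for w
    using S(1,2) by (intro map_cong) (auto simp: corrupt_def)
  then have Corr: "?Corr = {(x, r). x \<in> strings n \<and> r \<in> strings m \<and>
                       (f \<circ> g) (restrict_word (C x @ r) (warp m \<omega> ` S)) = x ! i}"
    by (simp only: g comp_def)
  show ?thesis
  proof (cases "warp m \<omega> ` S \<in> Good q \<epsilon> n m C i")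
    case True
    have "?Corr \<subseteq> strings n \<times> strings m" by auto
    then have "card ?Corr \<le> card (strings n \<times> strings m)"
      using card_strings by (intro card_mono) (simp_all add: finite_cartesian_product)
    then have "card ?Corr \<le> 2 ^ (n + m)"
      using card_strings by (simp add: card_cartesian_product power_add)
    then have "real (card ?Corr) \<le> 2 ^ (n + m)" by (simp only: of_nat_le_numeral_power_cancel_iff)
    moreover have "0 \<le> (1/2 + \<epsilon>/4) * (2::real) ^ (n + m)" using e0 by simp
    ultimately show ?thesis using True by (simp only: if_True)
  next
    case False
    have "warp m \<omega> ` S \<subseteq> {0..<2 * m}" using S(2) warp_less_2m[OF w] by auto
    moreover have "card (warp m \<omega> ` S) = q"
      using S(3) warp_strict_mono by (simp add: card_image strict_mono_imp_inj_on strict_mono_def)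
    ultimately have "\<not> (\<exists>h. real (card {(x, r). x \<in> strings n \<and> r \<in> strings m \<and>
                          h (restrict_word (C x @ r) (warp m \<omega> ` S)) = x ! i}) / 2 ^ (n + m) \<ge> 1/2 + \<epsilon>/4)"
      using False unfolding Good_def by simp
    then have "\<not> real (card ?Corr) / 2 ^ (n + m) \<ge> 1/2 + \<epsilon>/4"
      unfolding Corr by (simp only: not_ex not_False_eq_True)
    then show ?thesis using False by (simp add: not_le divide_less_eq)
  qed
qed

lemma card_decoder_correct_le:
  assumes few: "few_good i" and Q: "\<forall>p\<in>set Q. p < m" "length Q \<le> q"
  shows "real (card {(\<omega>, x, r). \<omega> \<in> adversaries m U R H \<and> x \<in> strings n \<and> r \<in> strings m \<and>
                        f (map ((!) (corrupt \<omega> (C x @ r))) Q) = x ! i})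
           \<le> (1/2 + \<epsilon>/2) * real (card (adversaries m U R H)) * 2 ^ (n + m)"
proof -
  have "set Q \<subseteq> {..<m}" using Q(1) by auto
  moreover have "card (set Q) \<le> q" using Q(2) card_length[of Q] by linarith
  ultimately obtain S where S: "set Q \<subseteq> S" "S \<subseteq> {..<m}" "card S = q"
    by (rule obtain_superset_with_card[OF _ finite_lessThan]) (simp_all add: mq)
  define \<Omega> where "\<Omega> = adversaries m U R H"
  define Corr where "Corr \<omega> = {(x, r). x \<in> strings n \<and> r \<in> strings m \<and>
                                      f (map ((!) (corrupt \<omega> (C x @ r))) Q) = x ! i}" for \<omega>
  define Bad where "Bad = {\<omega> \<in> \<Omega>. warp m \<omega> ` S \<in> Good q \<epsilon> n m C i}"
  define N :: real where "N = 2 ^ (n + m)"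
  have fin: "finite (Corr \<omega>)" for \<omega>
  proof (rule finite_subset)
    show "Corr \<omega> \<subseteq> strings n \<times> strings m" unfolding Corr_def by blast
    show "finite (strings n \<times> strings m)" using card_strings by blast
  qed
  have "{(\<omega>, x, r). \<omega> \<in> \<Omega> \<and> x \<in> strings n \<and> r \<in> strings m \<and>
                     f (map ((!) (corrupt \<omega> (C x @ r))) Q) = x ! i} = Sigma \<Omega> Corr"
    unfolding Corr_def by auto
  then have "real (card {(\<omega>, x, r). \<omega> \<in> \<Omega> \<and> x \<in> strings n \<and> r \<in> strings m \<and>
                            f (map ((!) (corrupt \<omega> (C x @ r))) Q) = x ! i})
      = (\<Sum>\<omega>\<in>\<Omega>. real (card (Corr \<omega>)))"
    using card_SigmaI[of \<Omega> Corr] fin finite_adversaries unfolding \<Omega>_def by simp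
  also have "\<dots> \<le> (\<Sum>\<omega>\<in>\<Omega>. (1/2 + \<epsilon>/4) * N + (if \<omega> \<in> Bad then N else 0))"
  proof (rule sum_mono)
    fix \<omega> assume "\<omega> \<in> \<Omega>"
    then show "real (card (Corr \<omega>)) \<le> (1/2 + \<epsilon>/4) * N + (if \<omega> \<in> Bad then N else 0)"
      using card_correct_given_adversary_le[OF _ S] unfolding Corr_def Bad_def N_def \<Omega>_def by simp
  qed
  also have "\<dots> = real (card \<Omega>) * ((1/2 + \<epsilon>/4) * N) + N * real (card Bad)"
  proof -
    have "Bad \<subseteq> \<Omega>" unfolding Bad_def by blast
    then have "(\<Sum>\<omega>\<in>\<Omega>. if \<omega> \<in> Bad then N else 0) = N * real (card Bad)"
      using finite_adversaries by (simp add: sum.If_cases Int_absorb1 \<Omega>_def)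
    then show ?thesis by (simp add: sum.distrib)
  qed
  also have "\<dots> \<le> real (card \<Omega>) * ((1/2 + \<epsilon>/4) * N) + N * (\<epsilon> / 4 * real (card \<Omega>))"
    using card_good_warps_le[OF few S(2,3)] unfolding Bad_def \<Omega>_def N_def
    by (intro add_left_mono mult_left_mono) simp_all
  finally show ?thesis unfolding \<Omega>_def N_def by (simp add: algebra_simps)
qed

text \<open>Averaging over the random adversary, message and padding: the decoder must be right with
  probability \<open>1/2 + \<epsilon>\<close> against every corruption, but for each fixed query it is right on at most
  a \<open>1/2 + \<epsilon>/2\<close> fraction of them.\<close>

lemma not_few_good:
  assumes LDC: "nonadaptive_insdel_LDC q \<delta> \<epsilon> n m C" and "i < n"
  shows "\<not> few_good i"
proof
  assume few: "few_good i"
  obtain Dec where len: "\<And>x. x \<in> strings n \<Longrightarrow> length (C x) = m"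
    and queries: "\<And>m' i Q f. (Q, f) \<in> set_pmf (Dec m' i) \<Longrightarrow> length Q \<le> q \<and> (\<forall>p\<in>set Q. p < m')"
    and correct: "\<And>x y i. x \<in> strings n \<Longrightarrow> i < n \<Longrightarrow> real (ED (C x) y) \<le> 2 * \<delta> * real m \<Longrightarrow>
                    dec_output_prob Dec y i (x ! i) \<ge> 1/2 + \<epsilon>"
    by (rule nonadaptive_insdel_LDCE[OF LDC]) blast
  define I where "I = adversaries m U R H \<times> strings n \<times> strings m"
  define E where "E = (\<lambda>(\<omega>, x, r). {(Q, f). f (map ((!) (corrupt \<omega> (C x @ r))) Q) = x ! i})"
  define N where "N = real (card (adversaries m U R H)) * 2 ^ (n + m)"
  have I: "finite I" "real (card I) = N"
    unfolding I_def N_def using card_strings finite_adversaries by (auto simp: card_cartesian_product power_add)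
  have "real (card I) * (1/2 + \<epsilon>) \<le> (1/2 + \<epsilon>/2) * N"
  proof (rule card_mult_le_by_averaging[OF I(1)])
    fix \<iota> assume "\<iota> \<in> I"
    then obtain \<omega> x r where \<iota>: "\<iota> = (\<omega>, x, r)" "\<omega> \<in> adversaries m U R H" "x \<in> strings n" "r \<in> strings m"
      unfolding I_def by auto
    have "real (ED (C x) (corrupt \<omega> (C x @ r))) \<le> 2 * \<delta> * real m"
      using ED_corrupt_le[OF \<iota>(2) len[OF \<iota>(3)]] .
    from correct[OF \<iota>(3) \<open>i < n\<close> this]
    show "1/2 + \<epsilon> \<le> measure_pmf.prob (Dec m i) (E \<iota>)"
      by (simp add: dec_output_prob_def E_def \<iota>(1) corrupt_def)
  next
    fix z assume "z \<in> set_pmf (Dec m i)"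
    moreover obtain Q f where "z = (Q, f)" by fastforce
    ultimately have "{\<iota> \<in> I. z \<in> E \<iota>} = {(\<omega>, x, r). \<omega> \<in> adversaries m U R H \<and> x \<in> strings n \<and>
                       r \<in> strings m \<and> f (map ((!) (corrupt \<omega> (C x @ r))) Q) = x ! i}"
      and "\<forall>p\<in>set Q. p < m" "length Q \<le> q"
      using queries by (auto simp: I_def E_def)
    then show "real (card {\<iota> \<in> I. z \<in> E \<iota>}) \<le> (1/2 + \<epsilon>/2) * N"
      using card_decoder_correct_le[OF few, of Q f] by (simp add: N_def mult.assoc)
  qed
  moreover have "0 < N" using card_adversaries_pos[OF Upos Rpos] by (simp add: N_def)
  ultimately show False using I(2) e0 by (simp add: mult.commute)
qed

end

lemma four_le_four_ln:
  fixes q :: nat and \<epsilon> :: real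
  assumes "3 \<le> q" "0 < \<epsilon>" "\<epsilon> \<le> 1/2"
  shows "4 \<le> 4 * ln (real q / \<epsilon>)"
proof -
  have "6 \<le> real q / \<epsilon>" using assms by (simp add: field_simps)
  then have "exp 1 \<le> real q / \<epsilon>" using exp_le by linarith
  then show ?thesis using assms by (simp add: ln_ge_iff)
qed

lemma less_nat_floor_log2_Suc: "2 ^ s < m \<Longrightarrow> s < nat \<lfloor>log 2 (real m)\<rfloor> + 1"
proof -
  assume "2 ^ s < m"
  then have "(2::real) ^ s < real m" by (metis of_nat_less_iff of_nat_numeral of_nat_power)
  then have "log 2 (2 ^ s) < log 2 (real m)" by (subst log_less_cancel_iff) auto
  then have "real s < log 2 (real m)" by simp
  then show ?thesis by linarith
qed

lemma le_power_nat_ceiling_log: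
  fixes c x :: real
  assumes "1 < c" "0 < x"
  shows "x \<le> c ^ nat \<lceil>log c x\<rceil>"
proof -
  have "x = c powr (log c x)" using assms by simp
  also have "\<dots> \<le> c powr (real (nat \<lceil>log c x\<rceil>))"
    by (rule powr_mono) (use assms in linarith)+
  also have "\<dots> = c ^ nat \<lceil>log c x\<rceil>" using assms by (simp add: powr_realpow)
  finally show ?thesis .
qed

lemma adversary_setup_instance:
  fixes q m :: nat and \<delta> \<epsilon> :: real
  assumes q3: "3 \<le> q" and d0: "0 < \<delta>" and d1: "\<delta> < 1" and e0: "0 < \<epsilon>" and e1: "\<epsilon> \<le> 1/2"
    and mq: "q \<le> m" and m8: "8 / \<delta> \<le> real m"
  shows "adversary_setup q m (nat \<lfloor>\<delta> * m / 4\<rfloor>) (nat \<lfloor>\<delta> * m / 4\<rfloor>) (nat \<lceil>8 * (log 2 (real m) + 2) / \<delta>\<rceil>)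
           (nat \<lfloor>log 2 (real m)\<rfloor> + 1) (nat \<lceil>log (4 * ln (real q / \<epsilon>)) (2 * real m)\<rceil>)
           \<delta> \<epsilon> (4 * ln (real q / \<epsilon>)) (log 2 (real m) + 2)"
proof -
  define L0 where "L0 = log 2 (real m) + 2"
  define U where "U = nat \<lfloor>\<delta> * m / 4\<rfloor>"
  have c4: "4 \<le> 4 * ln (real q / \<epsilon>)" using q3 e0 e1 by (rule four_le_four_ln)
  have lg0: "0 \<le> log 2 (real m)" using mq q3 by simp
  then have L01: "1 \<le> L0" and NSL: "real (nat \<lfloor>log 2 (real m)\<rfloor> + 1) \<le> L0"
    unfolding L0_def by linarith+
  have "8 \<le> \<delta> * m" using m8 d0 by (simp add: field_simps)
  then have Ulo: "\<delta> * m / 8 \<le> real U" and Uhi: "real U \<le> \<delta> * m / 4" and Upos: "1 \<le> U"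
    unfolding U_def by linarith+
  have Hlo: "8 * L0 / \<delta> \<le> real (nat \<lceil>8 * L0 / \<delta>\<rceil>)" by linarith
  have "0 \<le> 8 * L0 / \<delta>" "1 \<le> L0 / \<delta>" using L01 d0 d1 by (simp_all add: field_simps)
  then have Hhi: "real (nat \<lceil>8 * L0 / \<delta>\<rceil>) \<le> 9 * L0 / \<delta>" by linarith
  have ct: "2 * real m \<le> (4 * ln (real q / \<epsilon>)) ^ nat \<lceil>log (4 * ln (real q / \<epsilon>)) (2 * real m)\<rceil>"
    using c4 mq q3 by (intro le_power_nat_ceiling_log) auto
  show ?thesis unfolding L0_def[symmetric] U_def[symmetric]
  proof unfold_locales
    show "1 \<le> L0" by (rule L01)
  qed (use q3 d0 d1 e0 c4 NSL Ulo Uhi Upos Hlo Hhi ct mq less_nat_floor_log2_Suc in auto)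
qed

lemma good_box_exists:
  fixes q m :: nat and \<delta> \<epsilon> :: real
  assumes "3 \<le> q" "0 < \<delta>" "\<delta> < 1" "0 < \<epsilon>" "\<epsilon> \<le> 1/2" "q \<le> m" "8 / \<delta> \<le> real m"
    and LDC: "nonadaptive_insdel_LDC q \<delta> \<epsilon> n m C" and "i < n"
  shows "\<exists>js. length js = q - 1 \<and> set js \<subseteq> {1..nat \<lceil>log (4 * ln (real q / \<epsilon>)) (2 * real m)\<rceil>} \<and>
           real (card {p \<in> Pbox (4 * ln (real q / \<epsilon>)) m js. tuple_set p \<in> Good q \<epsilon> n m C i})
             \<ge> \<epsilon> / (256 * (4 * ln (real q / \<epsilon>))^2 / \<delta>) ^ q
                 * real (card (Pbox (4 * ln (real q / \<epsilon>)) m js)) / (log 2 (real m) + 2) ^ (q - 2)"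
proof -
  interpret adversary_setup q n m "nat \<lfloor>\<delta> * m / 4\<rfloor>" "nat \<lfloor>\<delta> * m / 4\<rfloor>"
      "nat \<lceil>8 * (log 2 (real m) + 2) / \<delta>\<rceil>" "nat \<lfloor>log 2 (real m)\<rfloor> + 1"
      "nat \<lceil>log (4 * ln (real q / \<epsilon>)) (2 * real m)\<rceil>" \<delta> \<epsilon> "4 * ln (real q / \<epsilon>)"
      "log 2 (real m) + 2" C
    using assms by (intro adversary_setup_instance)
  show ?thesis using not_few_good[OF LDC \<open>i < n\<close>] unfolding few_good_def by (auto simp: not_less)
qed

theorem mainTheorem19:
  fixes q :: nat and \<delta> \<epsilon> :: real
  assumes "q \<ge> 3" and "0 < \<delta>" and "\<delta> < 1" and "0 < \<epsilon>" and "\<epsilon> \<le> 1/2"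
  shows "\<exists>M. \<forall>m n (C :: bool list \<Rightarrow> bool list). m \<ge> M \<longrightarrow>
           nonadaptive_insdel_LDC q \<delta> \<epsilon> n m C \<longrightarrow>
           (let c = 4 * ln (real q / \<epsilon>);
                t = nat \<lceil>log c (2 * real m)\<rceil>;
                \<gamma> = \<epsilon> / (256 * c^2 / \<delta>) ^ q
            in \<forall>i<n. \<exists>js. length js = q - 1 \<and> set js \<subseteq> {1..t} \<and>
                 real (card {p \<in> Pbox c m js. tuple_set p \<in> Good q \<epsilon> n m C i})
                   \<ge> \<gamma> * real (card (Pbox c m js)) / (log 2 (real m) + 2) ^ (q - 2))"
  unfolding Let_def
proof (intro exI[of _ "max q (nat \<lceil>8 / \<delta>\<rceil>)"] allI impI)
  fix m n i and C :: "bool list \<Rightarrow> bool list"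
  assume "max q (nat \<lceil>8 / \<delta>\<rceil>) \<le> m" "nonadaptive_insdel_LDC q \<delta> \<epsilon> n m C" "i < n"
  moreover from this(1) have "q \<le> m" "8 / \<delta> \<le> real m" by linarith+
  ultimately show "\<exists>js. length js = q - 1 \<and> set js \<subseteq> {1..nat \<lceil>log (4 * ln (real q / \<epsilon>)) (2 * real m)\<rceil>} \<and>
           real (card {p \<in> Pbox (4 * ln (real q / \<epsilon>)) m js. tuple_set p \<in> Good q \<epsilon> n m C i})
             \<ge> \<epsilon> / (256 * (4 * ln (real q / \<epsilon>))^2 / \<delta>) ^ q
                 * real (card (Pbox (4 * ln (real q / \<epsilon>)) m js)) / (log 2 (real m) + 2) ^ (q - 2)"
    using assms by (intro good_box_exists)
qed

end
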